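(* Let $\psi:\mathbb R^d\to\mathbb R^d$ be differentiable and bijective, and suppose there are constants $0\le\mathfrak m_1<\infty$ and $0\le\mathfrak m_2<1$ such that $\|\psi(v)-v\|\le\mathfrak m_1$ and $\|\nabla\psi(v)-I\|_{op}\le\mathfrak m_2$ for all $v\in\mathbb R^d$. Then \[ \mathsf{KL}(\psi_\#\boldsymbol\gamma_d\,\|\,\boldsymbol\gamma_d)\le\frac12\mathfrak m_1^2+\frac{d\,\mathfrak m_2^2}{2(1-\mathfrak m_2)}. \]
   Context: $\boldsymbol\gamma_d=\mathcal N(0,I_d)$ is the standard Gaussian on $\mathbb R^d$; $\psi_\#\boldsymbol\gamma_d$ is its pushforward under $\psi$; $\|\cdot\|_{op}$ is the Euclidean operator norm. $\mathsf{KL}(\mu\|\pi)=\mathbb E_\mu[\log\frac{d\mu}{d\pi}]$ if $\mu\ll\pi$, else $+\infty$. *)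

theory Defs
  imports "HOL-Probability.Probability"
begin

definition std_gaussian :: "'a::euclidean_space measure" where
  "std_gaussian = density lborel
     (\<lambda>x. ennreal ((2 * pi) powr (- real DIM('a) / 2) * exp (- (norm x)\<^sup>2 / 2)))"

definition pushforward :: "('a::euclidean_space \<Rightarrow> 'a) \<Rightarrow> 'a measure \<Rightarrow> 'a measure" where
  "pushforward f M = distr M borel f"

end

(* Write psi = id + g. By change of variables the pushforward has a density rho with respect
   to the standard Gaussian, with  ln rho (psi x) = <x, g x> + |g x|^2 / 2 - ln |det psi'(x)|,
   so the divergence is the Gaussian mean of this expression. Gaussian integration by parts
   (Stein's identity) replaces the mean of <x, g x> by the mean of tr g'(x), and |g|^2 / 2 is at
   most m1^2 / 2. Finally, if ||A|| <= r < 1 then every complex eigenvalue l of A has |l| <= r,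
   hence Re l - ln |1 + l| <= r^2 / (2 (1 - r)); summing over the eigenvalues gives
   tr A - ln |det (I + A)| <= d r^2 / (2 (1 - r)). *)

theory Submission
  imports Defs "HOL-Computational_Algebra.Fundamental_Theorem_Algebra"
begin

lemma ln_one_plus_ge:
  fixes x :: real
  assumes "0 \<le> x"
  shows "x - x\<^sup>2 / 2 \<le> ln (1 + x)"
proof -
  let ?f = "\<lambda>t::real. ln (1 + t) - t + t\<^sup>2 / 2"
  have "?f 0 \<le> ?f x"
  proof (rule DERIV_nonneg_imp_nondecreasing[OF assms])
    fix t :: real
    assume t: "0 \<le> t" "t \<le> x"
    have "(?f has_real_derivative (1 / (1 + t) - 1 + t)) (at t)"
      using t by (auto intro!: derivative_eq_intros simp: power2_eq_square)
    moreover have "1 / (1 + t) - 1 + t = t\<^sup>2 / (1 + t)"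
      using t by (simp add: field_simps power2_eq_square)
    ultimately show "\<exists>y. (?f has_real_derivative y) (at t) \<and> 0 \<le> y"
      using t by fastforce
  qed
  then show ?thesis by simp
qed

lemma ln_one_minus_ge:
  fixes y :: real
  assumes "0 \<le> y" "y < 1"
  shows "- y - y\<^sup>2 / (2 * (1 - y)) \<le> ln (1 - y)"
proof -
  let ?f = "\<lambda>t::real. ln (1 - t) + t + t\<^sup>2 / (2 * (1 - t))"
  have "?f 0 \<le> ?f y"
  proof (rule DERIV_nonneg_imp_nondecreasing[OF assms(1)])
    fix t :: real
    assume t: "0 \<le> t" "t \<le> y"
    then have t1: "t < 1" using assms by simp
    let ?D = "- 1 / (1 - t) + 1 + (2 * t * (2 * (1 - t)) + t\<^sup>2 * 2) / (2 * (1 - t))\<^sup>2"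
    have "(?f has_real_derivative ?D) (at t)"
      using t1 by (auto intro!: derivative_eq_intros simp: power2_eq_square)
    moreover have "?D = t\<^sup>2 / (2 * (1 - t)\<^sup>2)"
    proof -
      define a where "a = 1 - t"
      have a: "a \<noteq> 0" "t = 1 - a" using t1 by (auto simp: a_def)
      show ?thesis unfolding a_def[symmetric] using a(1) unfolding a(2)
        by (simp add: field_simps power2_eq_square)
    qed
    ultimately show "\<exists>y. (?f has_real_derivative y) (at t) \<and> 0 \<le> y" by fastforce
  qed
  then show ?thesis by simp
qed

lemma sub_ln_one_plus_le:
  fixes x r :: real
  assumes "\<bar>x\<bar> \<le> r" "r < 1"
  shows "x - ln (1 + x) \<le> r\<^sup>2 / (2 * (1 - r))"
proof (cases "0 \<le> x")
  case True
  have "x - ln (1 + x) \<le> x\<^sup>2 / 2" using ln_one_plus_ge[OF True] by simp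
  also have "\<dots> \<le> r\<^sup>2 / 2" using assms True by (simp add: power_mono)
  also have "\<dots> \<le> r\<^sup>2 / (2 * (1 - r))"
    using assms True by (simp add: divide_left_mono field_simps)
  finally show ?thesis .
next
  case False
  define y where "y = - x"
  have y: "0 \<le> y" "y \<le> r" "y < 1" using assms False by (auto simp: y_def)
  have "x - ln (1 + x) = - y - ln (1 - y)" by (simp add: y_def)
  also have "\<dots> \<le> y\<^sup>2 / (2 * (1 - y))" using ln_one_minus_ge[of y] y by simp
  also have "\<dots> \<le> r\<^sup>2 / (2 * (1 - r))"
    using y assms by (intro frac_le power_mono) auto
  finally show ?thesis .
qed

lemma cmod_one_plus_bounds:
  fixes l :: complex and r :: real
  assumes "cmod l \<le> r" "r < 1"
  shows "0 < cmod (1 + l)"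
    and "Re l - ln (cmod (1 + l)) \<le> r\<^sup>2 / (2 * (1 - r))"
    and "ln (cmod (1 + l)) \<le> r"
    and "ln (1 - r) \<le> ln (cmod (1 + l))"
proof -
  have r0: "0 \<le> r" using assms(1) norm_ge_zero order_trans by blast
  have Re: "\<bar>Re l\<bar> \<le> r" using abs_Re_le_cmod[of l] assms by linarith
  have lower: "1 - r \<le> cmod (1 + l)"
    using norm_triangle_ineq2[of 1 "-l"] assms by (simp add: norm_minus_commute)
  show pos: "0 < cmod (1 + l)" using lower assms by linarith
  have "ln (1 + Re l) \<le> ln (cmod (1 + l))"
    using abs_Re_le_cmod[of "1 + l"] Re assms by (subst ln_le_cancel_iff) auto
  then show "Re l - ln (cmod (1 + l)) \<le> r\<^sup>2 / (2 * (1 - r))"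
    using sub_ln_one_plus_le[OF Re assms(2)] by linarith
  have "cmod (1 + l) \<le> 1 + r" using norm_triangle_ineq[of 1 l] assms by simp
  then have "ln (cmod (1 + l)) \<le> ln (1 + r)" using pos r0 by (subst ln_le_cancel_iff) auto
  also have "\<dots> \<le> r" using r0 by (rule ln_add_one_self_le_self)
  finally show "ln (cmod (1 + l)) \<le> r" .
  show "ln (1 - r) \<le> ln (cmod (1 + l))" using lower assms by (subst ln_le_cancel_iff) auto
qed

lemma prod_mset_one_plus_bounds:
  fixes L :: "complex multiset" and r :: real
  assumes "\<forall>l\<in>#L. cmod l \<le> r" "0 \<le> r" "r < 1"
  shows "0 < cmod (\<Prod>l\<in>#L. 1 + l)
    \<and> Re (sum_mset L) - ln (cmod (\<Prod>l\<in>#L. 1 + l)) \<le> real (size L) * (r\<^sup>2 / (2 * (1 - r)))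
    \<and> ln (cmod (\<Prod>l\<in>#L. 1 + l)) \<le> real (size L) * r
    \<and> real (size L) * ln (1 - r) \<le> ln (cmod (\<Prod>l\<in>#L. 1 + l))"
  using assms(1)
proof (induction L)
  case empty
  then show ?case by simp
next
  case (add x L)
  define P where "P = (\<Prod>l\<in>#L. 1 + l)"
  have IH: "0 < cmod P"
    "Re (sum_mset L) - ln (cmod P) \<le> real (size L) * (r\<^sup>2 / (2 * (1 - r)))"
    "ln (cmod P) \<le> real (size L) * r"
    "real (size L) * ln (1 - r) \<le> ln (cmod P)"
    using add by (auto simp: P_def)
  have x: "cmod x \<le> r" using add.prems by simp
  note bounds = cmod_one_plus_bounds[OF x assms(3)]
  have ln_prod: "ln (cmod ((1 + x) * P)) = ln (cmod (1 + x)) + ln (cmod P)"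
    using bounds(1) IH(1) by (simp add: norm_mult ln_mult)
  have size: "real (size (add_mset x L)) = 1 + real (size L)" by simp
  obtain h where h: "r\<^sup>2 / (2 * (1 - r)) = h" by blast
  have "0 < cmod ((1 + x) * P)" using bounds(1) IH(1) by (simp add: norm_mult)
  moreover have "Re (sum_mset (add_mset x L)) - ln (cmod ((1 + x) * P))
      \<le> real (size (add_mset x L)) * (r\<^sup>2 / (2 * (1 - r)))"
    using bounds(2) IH(2) unfolding ln_prod size h by (simp add: algebra_simps)
  moreover have "ln (cmod ((1 + x) * P)) \<le> real (size (add_mset x L)) * r"
    using bounds(3) IH(3) unfolding ln_prod size by (simp add: algebra_simps)
  moreover have "real (size (add_mset x L)) * ln (1 - r) \<le> ln (cmod ((1 + x) * P))"
    using bounds(4) IH(4) unfolding ln_prod size by (simp add: algebra_simps)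
  moreover have "(\<Prod>l\<in>#add_mset x L. 1 + l) = (1 + x) * P" by (simp add: P_def)
  ultimately show ?case by simp
qed

section \<open>The polynomial \<open>det (I + w A)\<close>\<close>

lemma poly_eq_prod_mset_linear_factors:
  fixes P :: "complex poly"
  assumes "poly P 0 = 1"
  shows "\<exists>L. P = (\<Prod>l\<in>#L. [:1, l:]) \<and> size L = degree P"
  using assms
proof (induction "degree P" arbitrary: P rule: less_induct)
  case less
  show ?case
  proof (cases "degree P = 0")
    case True
    then obtain c where "P = [:c:]" by (metis degree_eq_zeroE)
    with less.prems have "P = 1" by (simp add: one_pCons)
    then show ?thesis by (intro exI[of _ "{#}"]) simp
  next
    case False
    then have "\<not> constant (poly P)" by (simp add: constant_degree)
    then obtain z where z: "poly P z = 0" using fundamental_theorem_of_algebra by blast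
    have z0: "z \<noteq> 0" using z less.prems by auto
    have "[:-z, 1:] dvd P" using z by (simp add: poly_eq_0_iff_dvd)
    then obtain Q where PQ: "P = [:-z, 1:] * Q" by (elim dvdE)
    have Q0: "Q \<noteq> 0" using PQ less.prems by auto
    define Q' where "Q' = smult (-z) Q"
    have "smult (-z) [:1, -1/z:] = [:-z, 1:]" using z0 by simp
    then have PQ': "P = [:1, -1/z:] * Q'" unfolding PQ Q'_def
      by (metis mult_smult_left mult_smult_right)
    have Q'0: "poly Q' 0 = 1" using less.prems PQ by (simp add: Q'_def)
    have degP: "degree P = degree Q + 1" by (subst PQ, subst degree_mult_eq) (use Q0 in auto)
    have degQ': "degree Q' = degree Q" using z0 by (simp add: Q'_def)
    obtain L where L: "Q' = (\<Prod>l\<in>#L. [:1, l:])" "size L = degree Q'"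
      using less.hyps[OF _ Q'0] degP degQ' by auto
    show ?thesis
      using L PQ' degP degQ' by (intro exI[of _ "add_mset (-1/z) L"]) simp
  qed
qed

lemma coeff_prod_mset_linear_factors:
  fixes L :: "complex multiset"
  shows "coeff (\<Prod>l\<in>#L. [:1, l:]) 1 = sum_mset L"
proof -
  have "coeff (\<Prod>l\<in>#L. [:1, l:]) 1 = sum_mset L \<and> coeff (\<Prod>l\<in>#L. [:1, l:]) 0 = 1"
    by (induction L) (simp_all add: coeff_mult atMost_Suc)
  then show ?thesis ..
qed

lemma coeff_1_prod_linear:
  fixes c d :: "'i \<Rightarrow> 'a::comm_ring_1"
  assumes "finite S"
  shows "coeff (\<Prod>i\<in>S. [:c i, d i:]) 1 = (\<Sum>i\<in>S. d i * (\<Prod>j\<in>S-{i}. c j))"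
proof -
  have "coeff (\<Prod>i\<in>S. [:c i, d i:]) 1 = (\<Sum>i\<in>S. d i * (\<Prod>j\<in>S-{i}. c j))
      \<and> coeff (\<Prod>i\<in>S. [:c i, d i:]) 0 = (\<Prod>i\<in>S. c i)"
    using assms
  proof (induction S rule: finite_induct)
    case empty
    then show ?case by simp
  next
    case (insert x F)
    have e: "\<And>i. i \<in> F \<Longrightarrow> insert x F - {i} = insert x (F - {i})" using insert.hyps by auto
    have "(\<Sum>i\<in>F. d i * (\<Prod>j\<in>insert x F-{i}. c j)) = (\<Sum>i\<in>F. c x * (d i * (\<Prod>j\<in>F-{i}. c j)))"
      using insert.hyps by (intro sum.cong refl) (simp add: e algebra_simps)
    moreover have "insert x F - {x} = F" using insert.hyps by auto
    ultimately show ?case using insert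
      by (simp add: coeff_mult atMost_Suc sum_distrib_left algebra_simps)
  qed
  then show ?thesis ..
qed

text \<open>\<open>rev_charpoly A\<close> is \<open>det (I + w A)\<close> as a polynomial in \<open>w\<close>; its roots are
  the numbers \<open>-1/\<lambda>\<close> for the nonzero complex eigenvalues \<open>\<lambda>\<close> of \<open>A\<close>.\<close>

definition rev_charpoly :: "real^'n^'n \<Rightarrow> complex poly" where
  "rev_charpoly A = det (\<chi> i j. [: of_bool (i = j), complex_of_real (A$i$j) :])"

lemma poly_rev_charpoly:
  "poly (rev_charpoly A) w = det (\<chi> i j. of_bool (i = j) + w * complex_of_real (A$i$j))"
  unfolding rev_charpoly_def det_def by (simp add: poly_sum poly_prod)

lemma poly_rev_charpoly_0: "poly (rev_charpoly (A::real^'n^'n)) 0 = 1"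
proof -
  have "((\<chi> i j. of_bool (i = j)) :: complex^'n^'n) = mat 1"
    by (simp add: mat_def vec_eq_iff)
  then show ?thesis by (simp add: poly_rev_charpoly det_I)
qed

lemma poly_rev_charpoly_1: "poly (rev_charpoly A) 1 = complex_of_real (det (mat 1 + A))"
  unfolding poly_rev_charpoly det_def of_real_sum
  by (intro sum.cong refl) (simp add: of_real_prod mat_def, intro prod.cong refl, simp)

lemma degree_rev_charpoly_le: "degree (rev_charpoly (A::real^'n^'n)) \<le> CARD('n)"
  unfolding rev_charpoly_def det_def
proof (rule degree_sum_le)
  fix p
  let ?E = "\<lambda>i. (\<chi> i j. [:of_bool (i = j), complex_of_real (A $ i $ j):]) $ i $ p i"
  have "degree (\<Prod>i\<in>UNIV. ?E i) \<le> (\<Sum>i\<in>UNIV. degree (?E i))"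
    by (rule degree_prod_sum_le[unfolded o_def]) simp
  also have "\<dots> \<le> (\<Sum>i\<in>(UNIV::'n set). 1)"
    by (intro sum_mono) simp
  finally have "degree (\<Prod>i\<in>UNIV. ?E i) \<le> CARD('n)"
    by simp
  then show "degree (of_int (sign p) * (\<Prod>i\<in>UNIV. ?E i)) \<le> CARD('n)"
    by (metis (no_types, lifting) degree_mult_le degree_of_int add_0 order_trans)
qed simp

lemma coeff_1_rev_charpoly: "coeff (rev_charpoly (A::real^'n^'n)) 1 = complex_of_real (trace A)"
proof -
  let ?E = "\<lambda>p i. [:of_bool (i = p i), complex_of_real (A $ i $ p i):]"
  have "coeff (rev_charpoly A) 1
      = (\<Sum>p | p permutes (UNIV::'n set). of_int (sign p) * coeff (\<Prod>i\<in>UNIV. ?E p i) 1)"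
    unfolding rev_charpoly_def det_def by (simp add: coeff_sum of_int_poly)
  also have "\<dots> = (\<Sum>p | p permutes (UNIV::'n set). if p = id then complex_of_real (trace A) else 0)"
  proof (rule sum.cong[OF refl])
    fix p
    assume p: "p \<in> {p. p permutes (UNIV::'n set)}"
    have coeff_p: "coeff (\<Prod>i\<in>UNIV. ?E p i) 1
        = (\<Sum>i\<in>UNIV. complex_of_real (A $ i $ p i) * (\<Prod>j\<in>UNIV-{i}. of_bool (j = p j)))"
      by (rule coeff_1_prod_linear) simp
    show "of_int (sign p) * coeff (\<Prod>i\<in>UNIV. ?E p i) 1
        = (if p = id then complex_of_real (trace A) else 0)"
    proof (cases "p = id")
      case True
      then show ?thesis unfolding coeff_p by (simp add: sign_id trace_def of_real_sum)
    next
      case False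
      txt \<open>A permutation other than the identity moves at least two points.\<close>
      have no_fixed: "(\<Prod>j\<in>UNIV-{i}. of_bool (j = p j) :: complex) = 0" for i
      proof -
        obtain k where k: "p k \<noteq> k" using False by (metis eq_id_iff)
        have "p (p k) \<noteq> p k"
          using k p permutes_inj[of p UNIV] by (simp add: inj_eq)
        then obtain j where "j \<noteq> i" "p j \<noteq> j" using k by metis
        then show ?thesis by (intro prod_zero) (auto intro!: bexI[of _ j])
      qed
      show ?thesis
        unfolding coeff_p using False
        by (simp only: no_fixed mult_zero_right sum.neutral_const if_False)
    qed
  qed
  also have "\<dots> = complex_of_real (trace A)"
    by (simp add: permutes_id)
  finally show ?thesis .
qed

lemma rev_charpoly_root_norm_ge:
  fixes A :: "real^'n^'n"
  assumes bound: "\<And>v. norm (A *v v) \<le> r * norm v" and r0: "0 \<le> r"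
    and root: "poly (rev_charpoly A) w = 0"
  shows "1 \<le> r * cmod w"
proof -
  define M :: "complex^'n^'n" where "M = (\<chi> i j. of_bool (i = j) + w * complex_of_real (A$i$j))"
  have "det M = 0" using root by (simp add: poly_rev_charpoly M_def)
  then have "\<not> inj ((*v) M)"
    using det_nz_iff_inj_gen[of "(*v) M"]
    by (simp add: matrix_vector_mul_linear_gen matrix_of_matrix_vector_mul)
  then obtain v where v: "M *v v = 0" "v \<noteq> 0"
    using vec.linear_inj_iff_eq_0[OF matrix_vector_mul_linear_gen[of M]] by blast
  txt \<open>\<open>v = - w A v\<close>; split \<open>v\<close> into real and imaginary parts \<open>a\<close> and \<open>b\<close>.\<close>
  define u where "u = (\<lambda>i. \<Sum>j\<in>UNIV. complex_of_real (A$i$j) * v$j)"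
  have vu: "v$i = - w * u i" for i
  proof -
    have "(\<Sum>j\<in>UNIV. of_bool (i = j) * v$j) = (\<Sum>j\<in>UNIV. if i = j then v$j else 0)"
      by (intro sum.cong) auto
    then have "(M *v v)$i = v$i + w * u i"
      by (simp add: M_def matrix_vector_mult_def u_def sum.distrib sum_distrib_left algebra_simps)
    then show ?thesis using v(1) by (simp add: algebra_simps eq_neg_iff_add_eq_0)
  qed
  define a :: "real^'n" where "a = (\<chi> j. Re (v$j))"
  define b :: "real^'n" where "b = (\<chi> j. Im (v$j))"
  have Re_u: "Re (u i) = (A *v a)$i" and Im_u: "Im (u i) = (A *v b)$i" for i
    by (simp_all add: u_def matrix_vector_mult_def a_def b_def Re_sum Im_sum)
  have cmod_v: "(cmod (v$i))\<^sup>2 = (cmod w)\<^sup>2 * (((A *v a)$i)\<^sup>2 + ((A *v b)$i)\<^sup>2)" for i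
    using vu[of i] by (simp add: norm_mult power_mult_distrib cmod_power2 Re_u Im_u)
  have norm_sq: "(norm x)\<^sup>2 = (\<Sum>i\<in>UNIV. (x$i)\<^sup>2)" for x :: "real^'n"
    by (simp only: power2_norm_eq_inner) (simp add: inner_vec_def power2_eq_square)
  have norm_ab: "(norm a)\<^sup>2 + (norm b)\<^sup>2 = (\<Sum>i\<in>UNIV. (cmod (v$i))\<^sup>2)"
    by (simp add: norm_sq cmod_power2 a_def b_def sum.distrib)
  also have "\<dots> = (cmod w)\<^sup>2 * ((norm (A *v a))\<^sup>2 + (norm (A *v b))\<^sup>2)"
    by (simp add: cmod_v norm_sq sum_distrib_left sum.distrib algebra_simps)
  also have "\<dots> \<le> (cmod w)\<^sup>2 * (r\<^sup>2 * ((norm a)\<^sup>2 + (norm b)\<^sup>2))"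
  proof -
    have "(norm (A *v a))\<^sup>2 \<le> (r * norm a)\<^sup>2" using bound[of a] by (simp add: power_mono)
    moreover have "(norm (A *v b))\<^sup>2 \<le> (r * norm b)\<^sup>2" using bound[of b] by (simp add: power_mono)
    ultimately show ?thesis by (intro mult_left_mono) (auto simp: power_mult_distrib algebra_simps)
  qed
  finally have ineq: "(norm a)\<^sup>2 + (norm b)\<^sup>2 \<le> (r * cmod w)\<^sup>2 * ((norm a)\<^sup>2 + (norm b)\<^sup>2)"
    by (simp add: power_mult_distrib algebra_simps)
  have "0 < (norm a)\<^sup>2 + (norm b)\<^sup>2"
  proof -
    obtain i where "v$i \<noteq> 0" using v(2) by (metis vec_eq_iff zero_index)
    then have "0 < (cmod (v$i))\<^sup>2" by simp
    also have "\<dots> \<le> (\<Sum>i\<in>UNIV. (cmod (v$i))\<^sup>2)" by (rule member_le_sum) auto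
    finally show ?thesis using norm_ab by simp
  qed
  then have "1\<^sup>2 \<le> (r * cmod w)\<^sup>2" using ineq by simp
  then show ?thesis by (rule power2_le_imp_le) (use r0 in simp)
qed

lemma ln_det_one_plus_bounds:
  fixes A :: "real^'n^'n"
  assumes bound: "\<And>v. norm (A *v v) \<le> r * norm v" and r0: "0 \<le> r" and r1: "r < 1"
  shows "det (mat 1 + A) \<noteq> 0
    \<and> trace A - ln \<bar>det (mat 1 + A)\<bar> \<le> real CARD('n) * (r\<^sup>2 / (2 * (1 - r)))
    \<and> ln \<bar>det (mat 1 + A)\<bar> \<le> real CARD('n) * r
    \<and> real CARD('n) * ln (1 - r) \<le> ln \<bar>det (mat 1 + A)\<bar>"
proof -
  obtain L where L: "rev_charpoly A = (\<Prod>l\<in>#L. [:1, l:])" "size L = degree (rev_charpoly A)"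
    using poly_eq_prod_mset_linear_factors[OF poly_rev_charpoly_0] by blast
  have size_L: "size L \<le> CARD('n)" using L(2) degree_rev_charpoly_le[of A] by simp
  have roots: "\<forall>l\<in>#L. cmod l \<le> r"
  proof
    fix l
    assume l: "l \<in># L"
    show "cmod l \<le> r"
    proof (cases "l = 0")
      case True
      then show ?thesis using r0 by simp
    next
      case False
      have "poly (rev_charpoly A) (-1/l) = (\<Prod>l'\<in>#L. poly [:1, l':] (-1/l))"
        unfolding L(1) by (simp add: poly_prod_mset)
      also have "\<dots> = 0"
        using l False by (auto simp: prod_mset_zero_iff)
      finally have "1 \<le> r * cmod (-1/l)" by (rule rev_charpoly_root_norm_ge[OF bound r0])
      then show ?thesis using False by (simp add: norm_divide field_simps)
    qed
  qed
  have "complex_of_real (det (mat 1 + A)) = (\<Prod>l\<in>#L. 1 + l)"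
    using poly_rev_charpoly_1[of A] unfolding L(1) by (simp add: poly_prod_mset)
  then have abs_det: "\<bar>det (mat 1 + A)\<bar> = cmod (\<Prod>l\<in>#L. 1 + l)"
    by (metis norm_of_real)
  have trace: "trace A = Re (sum_mset L)"
    using coeff_1_rev_charpoly[of A] coeff_prod_mset_linear_factors[of L] unfolding L(1)
    by (metis Re_complex_of_real)
  obtain h where h: "r\<^sup>2 / (2 * (1 - r)) = h" by blast
  have "0 \<le> h" using r1 h by auto
  then have "real (size L) * h \<le> real CARD('n) * h"
    and "real (size L) * r \<le> real CARD('n) * r"
    and "real CARD('n) * ln (1 - r) \<le> real (size L) * ln (1 - r)"
    using size_L r0 r1 by (simp_all add: mult_right_mono mult_right_mono_neg)
  then show ?thesis
    using prod_mset_one_plus_bounds[OF roots r0 r1] unfolding abs_det trace h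
    by (auto simp: abs_det[symmetric])
qed

section \<open>Coordinates with respect to the standard basis\<close>

text \<open>Indexing coordinates by the basis itself identifies \<open>'a\<close> isometrically with
  \<open>real^'a basis_index\<close>, where HOL-Analysis provides matrices, determinants and the
  change-of-variables theorem.\<close>

typedef (overloaded) ('a::euclidean_space) basis_index = "Basis :: 'a set"
  using nonempty_Basis by blast

lemma range_Rep_basis_index:
  "range (Rep_basis_index :: 'a::euclidean_space basis_index \<Rightarrow> 'a) = Basis"
  using type_definition.Rep_range[OF type_definition_basis_index] by simp

lemma inj_Rep_basis_index: "inj Rep_basis_index"
  by (meson Rep_basis_index_inject injI)

instance basis_index :: (euclidean_space) finite
proof
  have "(UNIV :: 'a basis_index set) = Abs_basis_index ` Basis"
    using type_definition.Abs_image[OF type_definition_basis_index] by metis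
  then show "finite (UNIV :: 'a basis_index set)" by (metis finite_Basis finite_imageI)
qed

definition basis_index_nat :: "'a::euclidean_space basis_index \<Rightarrow> nat" where
  "basis_index_nat i = to_nat_on (Basis :: 'a set) (Rep_basis_index i)"

lemma inj_basis_index_nat: "inj basis_index_nat"
proof (rule injI)
  fix i j :: "'a basis_index" assume "basis_index_nat i = basis_index_nat j"
  then have "Rep_basis_index i = Rep_basis_index j"
    using inj_on_to_nat_on[of "Basis :: 'a set"] Rep_basis_index[of i] Rep_basis_index[of j]
    unfolding basis_index_nat_def by (meson countable_finite finite_Basis inj_onD)
  then show "i = j" by (simp add: Rep_basis_index_inject)
qed

text \<open>The change-of-variables theorem of HOL-Analysis is stated for index types of class
  \<open>wellorder\<close>.\<close>

instantiation basis_index :: (euclidean_space) wellorder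
begin

definition less_eq_basis_index :: "'a basis_index \<Rightarrow> 'a basis_index \<Rightarrow> bool" where
  "less_eq_basis_index i j = (basis_index_nat i \<le> basis_index_nat j)"

definition less_basis_index :: "'a basis_index \<Rightarrow> 'a basis_index \<Rightarrow> bool" where
  "less_basis_index i j = (basis_index_nat i < basis_index_nat j)"

instance
proof
  fix x y z :: "'a basis_index"
  show "(x < y) = (x \<le> y \<and> \<not> y \<le> x)" by (auto simp: less_eq_basis_index_def less_basis_index_def)
  show "x \<le> x" by (simp add: less_eq_basis_index_def)
  show "x \<le> y \<Longrightarrow> y \<le> z \<Longrightarrow> x \<le> z" by (simp add: less_eq_basis_index_def)
  show "x \<le> y \<Longrightarrow> y \<le> x \<Longrightarrow> x = y"
    unfolding less_eq_basis_index_def using inj_basis_index_nat by (meson antisym injD)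
  show "x \<le> y \<or> y \<le> x" by (auto simp: less_eq_basis_index_def)
next
  fix P :: "'a basis_index \<Rightarrow> bool" and a
  assume H: "\<And>x. (\<And>y. y < x \<Longrightarrow> P y) \<Longrightarrow> P x"
  show "P a"
    by (induction a rule: measure_induct_rule[of basis_index_nat])
      (rule H, simp add: less_basis_index_def)
qed

end

lemma card_basis_index: "CARD('a::euclidean_space basis_index) = DIM('a)"
  using type_definition.card[OF type_definition_basis_index] by simp

definition coords :: "'a::euclidean_space \<Rightarrow> real^('a basis_index)" where
  "coords x = (\<chi> i. x \<bullet> Rep_basis_index i)"

definition from_coords :: "real^('a::euclidean_space basis_index) \<Rightarrow> 'a" where
  "from_coords v = (\<Sum>i\<in>UNIV. v$i *\<^sub>R Rep_basis_index i)"

lemma inner_Rep_basis_index: "Rep_basis_index i \<bullet> Rep_basis_index j = (if i = j then 1 else 0)"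
  using Rep_basis_index[of i] Rep_basis_index[of j]
    inner_Basis[of "Rep_basis_index i" "Rep_basis_index j"]
  by (simp add: Rep_basis_index_inject)

lemma inner_from_coords: "from_coords v \<bullet> Rep_basis_index j = v$j"
proof -
  have "from_coords v \<bullet> Rep_basis_index j = (\<Sum>i\<in>UNIV. v$i * (if i = j then 1 else 0))"
    by (simp add: from_coords_def inner_sum_left inner_Rep_basis_index)
  also have "\<dots> = v$j" by (simp add: if_distrib cong: if_cong)
  finally show ?thesis .
qed

lemma coords_from_coords[simp]: "coords (from_coords v) = v"
  by (simp add: coords_def inner_from_coords vec_eq_iff)

lemma from_coords_coords[simp]: "from_coords (coords x) = x"
proof -
  have "from_coords (coords x) = (\<Sum>i\<in>UNIV. (x \<bullet> Rep_basis_index i) *\<^sub>R Rep_basis_index i)"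
    by (simp add: from_coords_def coords_def)
  also have "\<dots> = (\<Sum>b\<in>Basis. (x \<bullet> b) *\<^sub>R b)"
    by (rule sym, rule sum.reindex_cong[OF inj_Rep_basis_index range_Rep_basis_index[symmetric]])
      simp
  also have "\<dots> = x" by (rule euclidean_representation)
  finally show ?thesis .
qed

lemma linear_coords: "linear coords"
  by (rule linearI) (simp_all add: coords_def vec_eq_iff inner_add_left)

lemma linear_from_coords: "linear from_coords"
  by (rule linearI) (simp_all add: from_coords_def scaleR_add_left sum.distrib scaleR_sum_right)

lemma bounded_linear_coords: "bounded_linear coords"
  using linear_coords linear_conv_bounded_linear by blast

lemma bounded_linear_from_coords: "bounded_linear from_coords"
  using linear_from_coords linear_conv_bounded_linear by blast

lemma norm_from_coords: "norm (from_coords v) = norm v"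
proof -
  have "(norm (from_coords v))\<^sup>2 = from_coords v \<bullet> from_coords v" by (simp add: power2_norm_eq_inner)
  also have "\<dots> = (\<Sum>i\<in>UNIV. v$i * (Rep_basis_index i \<bullet> from_coords v))"
    by (simp add: from_coords_def inner_sum_left)
  also have "\<dots> = v \<bullet> v"
    using inner_from_coords[of v] by (simp add: inner_commute inner_vec_def)
  also have "\<dots> = (norm v)\<^sup>2" by (simp add: power2_norm_eq_inner)
  finally show ?thesis by simp
qed

lemma norm_coords: "norm (coords x) = norm x"
  using norm_from_coords[of "coords x"] by simp

lemma coords_nth: "coords x $ i = x \<bullet> Rep_basis_index i"
  by (simp add: coords_def)

lemma borel_measurable_from_coords[measurable]: "from_coords \<in> borel_measurable borel"
  by (intro borel_measurable_continuous_onI linear_continuous_on bounded_linear_from_coords)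

lemma borel_measurable_coords[measurable]: "coords \<in> borel_measurable borel"
  by (intro borel_measurable_continuous_onI linear_continuous_on bounded_linear_coords)

lemma Basis_vec_axis: "(Basis :: (real^'n) set) = range (\<lambda>i. axis i 1)"
  by (auto simp: Basis_vec_def)

lemma distr_lborel_from_coords:
  "distr lborel borel from_coords = (lborel :: 'a::euclidean_space measure)"
proof (rule lborel_eqI[symmetric])
  fix l u :: 'a
  assume lu: "\<And>b. b \<in> Basis \<Longrightarrow> l \<bullet> b \<le> u \<bullet> b"
  have "from_coords v \<in> box l u
      \<longleftrightarrow> (\<forall>b\<in>range Rep_basis_index. l \<bullet> b < from_coords v \<bullet> b \<and> from_coords v \<bullet> b < u \<bullet> b)"
    for v by (simp add: mem_box range_Rep_basis_index)
  then have "from_coords v \<in> box l u \<longleftrightarrow> v \<in> box (coords l) (coords u)" for v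
    by (simp add: mem_box_cart inner_from_coords coords_nth)
  then have preimage: "from_coords -` box l u = box (coords l) (coords u)"
    by auto
  have "\<And>j. j \<in> Basis \<Longrightarrow> coords l \<bullet> j \<le> coords u \<bullet> j"
    using lu Rep_basis_index
    by (auto simp: Basis_vec_axis cart_eq_inner_axis[symmetric] coords_nth Rep_basis_index)
  then have "emeasure (distr lborel borel from_coords) (box l u)
      = (\<Prod>j\<in>Basis. (coords u - coords l) \<bullet> j)"
    by (simp add: emeasure_distr preimage emeasure_lborel_box)
  also have "(\<Prod>j\<in>Basis. (coords u - coords l) \<bullet> j) = (\<Prod>i\<in>UNIV. (coords u - coords l) \<bullet> axis i 1)"
    unfolding Basis_vec_axis
    by (rule prod.reindex_cong[of "\<lambda>i. axis i 1"]) (auto intro!: injI simp: axis_eq_axis)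
  also have "\<dots> = (\<Prod>i\<in>UNIV. (u - l) \<bullet> Rep_basis_index i)"
    by (simp add: cart_eq_inner_axis[symmetric] coords_nth inner_diff_left)
  also have "\<dots> = (\<Prod>b\<in>Basis. (u - l) \<bullet> b)"
    by (rule sym, rule prod.reindex_cong[OF inj_Rep_basis_index range_Rep_basis_index[symmetric]])
      simp
  finally show "emeasure (distr lborel borel from_coords) (box l u) = (\<Prod>b\<in>Basis. (u - l) \<bullet> b)" .
qed simp

lemma
  fixes H :: "'a::euclidean_space \<Rightarrow> real"
  assumes [measurable]: "H \<in> borel_measurable borel"
  shows integrable_lborel_from_coords_iff:
      "integrable lborel (\<lambda>v. H (from_coords v)) \<longleftrightarrow> integrable lborel H"
    and integral_lborel_from_coords:
      "(\<integral>v. H (from_coords v) \<partial>lborel) = (\<integral>x. H x \<partial>lborel)"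
  using integrable_distr_eq[of from_coords lborel borel H]
    integral_distr[of from_coords lborel borel H]
  by (simp_all add: distr_lborel_from_coords)

definition coords_matrix :: "('a::euclidean_space \<Rightarrow> 'a) \<Rightarrow> real^'a basis_index^'a basis_index"
  where "coords_matrix L = matrix (\<lambda>v. coords (L (from_coords v)))"

definition jacobian_det :: "('a::euclidean_space \<Rightarrow> 'a) \<Rightarrow> real" where
  "jacobian_det L = det (coords_matrix L)"

lemma from_coords_axis: "from_coords (axis j 1) = Rep_basis_index j"
proof -
  have "from_coords (axis j 1) = (\<Sum>i\<in>UNIV. (if i = j then Rep_basis_index i else 0))"
    unfolding from_coords_def by (intro sum.cong) (auto simp: axis_def)
  then show ?thesis by simp
qed

lemma coords_matrix_nth: "coords_matrix L $ i $ j = L (Rep_basis_index j) \<bullet> Rep_basis_index i"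
  by (simp add: coords_matrix_def matrix_def from_coords_axis coords_nth)

lemma coords_matrix_eq_one_plus:
  "coords_matrix (L :: 'a::euclidean_space \<Rightarrow> 'a) = mat 1 + coords_matrix (\<lambda>h. L h - h)"
  by (simp add: vec_eq_iff coords_matrix_nth mat_def inner_diff_left inner_Rep_basis_index)

lemma trace_coords_matrix: "trace (coords_matrix L) = (\<Sum>b\<in>Basis. L b \<bullet> b)"
proof -
  have "trace (coords_matrix L) = (\<Sum>i\<in>UNIV. L (Rep_basis_index i) \<bullet> Rep_basis_index i)"
    by (simp add: trace_def coords_matrix_nth)
  also have "\<dots> = (\<Sum>b\<in>Basis. L b \<bullet> b)"
    by (rule sym, rule sum.reindex_cong[OF inj_Rep_basis_index range_Rep_basis_index[symmetric]])
      simp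
  finally show ?thesis .
qed

lemma norm_coords_matrix_mult_le:
  assumes "bounded_linear (L :: 'a::euclidean_space \<Rightarrow> 'a)"
  shows "norm (coords_matrix L *v v) \<le> onorm L * norm v"
proof -
  have "linear (\<lambda>v. coords (L (from_coords v)))"
    using bounded_linear_compose[OF bounded_linear_coords
        bounded_linear_compose[OF assms bounded_linear_from_coords]]
    by (simp add: bounded_linear.linear)
  then have "coords_matrix L *v v = coords (L (from_coords v))"
    unfolding coords_matrix_def by (simp add: matrix_works)
  then show ?thesis
    using onorm[OF assms, of "from_coords v"] by (simp add: norm_coords norm_from_coords)
qed

lemma jacobian_det_bounds:
  fixes L :: "'a::euclidean_space \<Rightarrow> 'a"
  assumes "bounded_linear L" and "onorm (\<lambda>h. L h - h) \<le> r" and "0 \<le> r" and "r < 1"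
  shows "jacobian_det L \<noteq> 0
    \<and> (\<Sum>b\<in>Basis. (L b - b) \<bullet> b) - ln \<bar>jacobian_det L\<bar> \<le> real DIM('a) * (r\<^sup>2 / (2 * (1 - r)))
    \<and> ln \<bar>jacobian_det L\<bar> \<le> real DIM('a) * r
    \<and> real DIM('a) * ln (1 - r) \<le> ln \<bar>jacobian_det L\<bar>"
proof -
  have "bounded_linear (\<lambda>h. L h - h)"
    using assms(1) by (intro bounded_linear_sub bounded_linear_ident)
  then have "norm (coords_matrix (\<lambda>h. L h - h) *v v) \<le> r * norm v" for v
    using norm_coords_matrix_mult_le[of "\<lambda>h. L h - h" v] assms(2)
    by (meson mult_right_mono norm_ge_zero order_trans)
  from ln_det_one_plus_bounds[OF this assms(3,4)] show ?thesis
    unfolding jacobian_det_def coords_matrix_eq_one_plus[of L] trace_coords_matrix card_basis_index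
    .
qed

lemma difference_quotient_inverse_Suc_tendsto:
  fixes f :: "real \<Rightarrow> real"
  assumes "(f has_real_derivative D) (at 0)"
  shows "(\<lambda>n. (f (inverse (real (Suc n))) - f 0) / inverse (real (Suc n))) \<longlonglongrightarrow> D"
proof -
  have lim: "((\<lambda>h. (f (0 + h) - f 0) / h) \<longlongrightarrow> D) (at 0)"
    using assms by (simp add: DERIV_def)
  have t: "filterlim (\<lambda>n. inverse (real (Suc n))) (at 0) sequentially"
    by (rule filterlim_atI) (use LIMSEQ_inverse_real_of_nat in auto)
  show ?thesis using filterlim_compose[OF lim t] by simp
qed

lemma borel_measurable_has_derivative:
  assumes "\<And>x. (f has_derivative f' x) (at x)"
  shows "f \<in> borel_measurable borel"
proof -
  have "continuous_on UNIV f"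
    using assms by (intro has_derivative_continuous_on) simp
  then show ?thesis by (rule borel_measurable_continuous_onI)
qed

lemma has_real_derivative_directional_inner:
  fixes f :: "'a::euclidean_space \<Rightarrow> 'b::euclidean_space"
  assumes "(f has_derivative f') (at x)"
  shows "((\<lambda>s. f (x + s *\<^sub>R w) \<bullet> e) has_real_derivative (f' w \<bullet> e)) (at 0)"
proof -
  have bl: "bounded_linear f'" using assms by (rule has_derivative_bounded_linear)
  have l1: "((\<lambda>s::real. x + s *\<^sub>R w) has_derivative (\<lambda>s. s *\<^sub>R w)) (at 0)"
    by (auto intro!: derivative_eq_intros)
  have "((\<lambda>s. f (x + s *\<^sub>R w)) has_derivative (\<lambda>s. f' (s *\<^sub>R w))) (at 0)"
    using has_derivative_compose[OF l1, of f f'] assms by simp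
  then have "((\<lambda>s. f (x + s *\<^sub>R w) \<bullet> e) has_derivative (\<lambda>s. f' (s *\<^sub>R w) \<bullet> e)) (at 0)"
    by (auto intro!: derivative_eq_intros)
  moreover have "(\<lambda>s. f' (s *\<^sub>R w) \<bullet> e) = (\<lambda>s. (f' w \<bullet> e) * s)"
    using linear_cmul[OF bounded_linear.linear[OF bl]] by (simp add: fun_eq_iff mult.commute)
  ultimately show ?thesis by (simp add: has_field_derivative_def)
qed

lemma borel_measurable_derivative_inner:
  fixes f :: "'a::euclidean_space \<Rightarrow> 'b::euclidean_space"
  assumes deriv: "\<And>x. (f has_derivative f' x) (at x)"
  shows "(\<lambda>x. f' x w \<bullet> e) \<in> borel_measurable borel"
proof (rule borel_measurable_LIMSEQ_metric)
  have [measurable]: "f \<in> borel_measurable borel"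
    using deriv by (rule borel_measurable_has_derivative)
  show "(\<lambda>x. (f (x + inverse (real (Suc n)) *\<^sub>R w) \<bullet> e - f (x + 0 *\<^sub>R w) \<bullet> e)
      / inverse (real (Suc n))) \<in> borel_measurable borel" for n
    by measurable
  show "(\<lambda>n. (f (x + inverse (real (Suc n)) *\<^sub>R w) \<bullet> e - f (x + 0 *\<^sub>R w) \<bullet> e)
      / inverse (real (Suc n))) \<longlonglongrightarrow> f' x w \<bullet> e" for x
    using has_real_derivative_directional_inner[OF deriv]
    by (rule difference_quotient_inverse_Suc_tendsto)
qed

lemma borel_measurable_jacobian_det:
  fixes f :: "'a::euclidean_space \<Rightarrow> 'a"
  assumes "\<And>x. (f has_derivative f' x) (at x)"
  shows "(\<lambda>x. jacobian_det (f' x)) \<in> borel_measurable borel"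
proof -
  have [measurable]: "(\<lambda>x. f' x w \<bullet> e) \<in> borel_measurable borel" for w e
    using assms by (rule borel_measurable_derivative_inner)
  show ?thesis
    unfolding jacobian_det_def det_def coords_matrix_nth by measurable
qed

section \<open>Change of variables\<close>

lemma
  fixes h :: "'b::euclidean_space \<Rightarrow> real"
  assumes [measurable]: "h \<in> borel_measurable borel"
  shows absolutely_integrable_vec_iff_lborel:
      "(\<lambda>x. vec (h x) :: real^1) absolutely_integrable_on UNIV \<longleftrightarrow> integrable lborel h"
    and integral_vec_eq_lborel:
      "integrable lborel h \<Longrightarrow> integral UNIV (\<lambda>x. vec (h x) :: real^1) = vec (\<integral>x. h x \<partial>lborel)"
proof -
  have "h absolutely_integrable_on UNIV \<longleftrightarrow> integrable lebesgue h"
    by (simp add: set_integrable_def)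
  also have "\<dots> \<longleftrightarrow> integrable lborel h"
    by (rule integrable_completion) simp
  finally show "(\<lambda>x. vec (h x) :: real^1) absolutely_integrable_on UNIV \<longleftrightarrow> integrable lborel h"
    by (simp add: absolutely_integrable_on_1_iff)
  show "integrable lborel h \<Longrightarrow> integral UNIV (\<lambda>x. vec (h x) :: real^1) = vec (\<integral>x. h x \<partial>lborel)"
    by (simp add: integral_on_1_eq integral_lborel)
qed

lemma
  fixes \<psi> :: "'a::euclidean_space \<Rightarrow> 'a" and F :: "'a \<Rightarrow> real"
  assumes bij: "bij \<psi>" and deriv: "\<And>x. (\<psi> has_derivative \<psi>' x) (at x)"
    and [measurable]: "F \<in> borel_measurable borel"
    and integrable: "integrable lborel (\<lambda>x. \<bar>jacobian_det (\<psi>' x)\<bar> * F (\<psi> x))"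
  shows integrable_lborel_change_of_variables: "integrable lborel F"
    and integral_lborel_change_of_variables:
      "(\<integral>y. F y \<partial>lborel) = (\<integral>x. \<bar>jacobian_det (\<psi>' x)\<bar> * F (\<psi> x) \<partial>lborel)"
proof -
  have [measurable]: "\<psi> \<in> borel_measurable borel"
    using deriv by (rule borel_measurable_has_derivative)
  have [measurable]: "(\<lambda>x. jacobian_det (\<psi>' x)) \<in> borel_measurable borel"
    using deriv by (rule borel_measurable_jacobian_det)
  define H where "H x = \<bar>jacobian_det (\<psi>' x)\<bar> * F (\<psi> x)" for x
  have H_measurable[measurable]: "H \<in> borel_measurable borel"
    unfolding H_def[abs_def] by measurable
  txt \<open>In coordinates, \<open>\<psi>\<close> becomes a map \<open>g\<close> on \<open>real^n\<close>, to which the change-of-variables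
    theorem of HOL-Analysis applies with the \<open>real^1\<close>-valued integrand \<open>f\<close>.\<close>
  define g where "g v = coords (\<psi> (from_coords v))" for v
  define g' where "g' v w = coords (\<psi>' (from_coords v) (from_coords w))" for v w
  define f where "f y = (vec (F (from_coords y)) :: real^1)" for y
  have "(g has_derivative g' v) (at v within UNIV)" for v
  proof -
    have "((\<lambda>v. \<psi> (from_coords v)) has_derivative (\<lambda>w. \<psi>' (from_coords v) (from_coords w))) (at v)"
      using bounded_linear_imp_has_derivative[OF bounded_linear_from_coords]
      by (rule has_derivative_compose) (rule deriv)
    then show ?thesis
      unfolding g_def[abs_def] g'_def[abs_def]
      using bounded_linear.has_derivative[OF bounded_linear_coords] by auto
  qed
  moreover have "bij g"
    using bij unfolding g_def[abs_def]
    by (intro o_bij[where g = "\<lambda>y. coords (inv \<psi> (from_coords y))"])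
      (auto simp: fun_eq_iff bij_is_inj bij_is_surj surj_f_inv_f)
  moreover have "\<bar>det (matrix (g' v))\<bar> *\<^sub>R f (g v) = vec (H (from_coords v))" for v
    by (simp add: g_def g'_def[abs_def] f_def H_def jacobian_det_def coords_matrix_def vec_scaleR)
  moreover have "integrable lborel (\<lambda>v. H (from_coords v))"
    using integrable integrable_lborel_from_coords_iff[OF H_measurable]
    by (simp add: H_def[abs_def])
  ultimately have "f absolutely_integrable_on UNIV
      \<and> integral UNIV f = vec (\<integral>v. H (from_coords v) \<partial>lborel)"
    using has_absolute_integral_change_of_variables
        [of UNIV g g' f "vec (\<integral>v. H (from_coords v) \<partial>lborel)"]
      bij_is_inj[of g] bij_is_surj[of g]
    by (simp add: absolutely_integrable_vec_iff_lborel integral_vec_eq_lborel)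
  moreover have F_coords: "(\<lambda>y. F (from_coords y)) \<in> borel_measurable borel"
    by measurable
  ultimately have "integrable lborel (\<lambda>y. F (from_coords y))"
    and "(\<integral>y. F (from_coords y) \<partial>lborel) = (\<integral>v. H (from_coords v) \<partial>lborel)"
    using absolutely_integrable_vec_iff_lborel[OF F_coords] integral_vec_eq_lborel[OF F_coords]
    by (auto simp: f_def[abs_def] vec_eq_iff)
  then show "integrable lborel F"
    and "(\<integral>y. F y \<partial>lborel) = (\<integral>x. \<bar>jacobian_det (\<psi>' x)\<bar> * F (\<psi> x) \<partial>lborel)"
    unfolding integrable_lborel_from_coords_iff[OF assms(3)]
      integral_lborel_from_coords[OF assms(3)]
      integral_lborel_from_coords[OF H_measurable]
    by (simp_all add: H_def[abs_def])
qed

definition gauss_density :: "'a::euclidean_space \<Rightarrow> real" where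
  "gauss_density x = (2 * pi) powr (- real DIM('a) / 2) * exp (- (norm x)\<^sup>2 / 2)"

lemma gauss_density_pos: "0 < gauss_density x" by (simp add: gauss_density_def)

lemma borel_measurable_gauss_density[measurable]: "gauss_density \<in> borel_measurable borel"
  unfolding gauss_density_def[abs_def] by measurable

lemma power2_norm_eq_sum_Basis: "(norm (x::'a::euclidean_space))\<^sup>2 = (\<Sum>b\<in>Basis. (x \<bullet> b)\<^sup>2)"
  by (simp only: power2_norm_eq_inner euclidean_inner[of x x]) (simp add: power2_eq_square)

lemma gauss_density_eq_prod:
  "gauss_density (x::'a::euclidean_space) = (\<Prod>b\<in>Basis. std_normal_density (x \<bullet> b))"
proof -
  have "(\<Prod>b\<in>(Basis::'a set). std_normal_density (x \<bullet> b))
      = (\<Prod>b\<in>(Basis::'a set). (1 / sqrt (2 * pi)) * exp (- (x \<bullet> b)\<^sup>2 / 2))"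
    by (simp add: std_normal_density_def)
  also have "\<dots> = (1 / sqrt (2 * pi)) ^ DIM('a) * exp (\<Sum>b\<in>Basis. - (x \<bullet> b)\<^sup>2 / 2)"
    unfolding prod.distrib by (simp add: exp_sum)
  also have "(\<Sum>b\<in>(Basis::'a set). - (x \<bullet> b)\<^sup>2 / 2) = - (norm x)\<^sup>2 / 2"
    by (simp add: power2_norm_eq_sum_Basis sum_divide_distrib[symmetric] sum_negf)
  also have "(1 / sqrt (2 * pi)) ^ DIM('a) = (2 * pi) powr (- real DIM('a) / 2)"
  proof -
    have "(2 * pi) powr (- real DIM('a) / 2) = ((2 * pi) powr (1/2)) powr (- real DIM('a))"
      by (simp add: powr_powr)
    also have "\<dots> = inverse (sqrt (2 * pi) powr real DIM('a))"
      by (simp add: powr_minus powr_half_sqrt)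
    also have "\<dots> = (1 / sqrt (2 * pi)) ^ DIM('a)"
      by (simp add: powr_realpow power_one_over inverse_eq_divide)
    finally show ?thesis by simp
  qed
  finally show ?thesis by (simp add: gauss_density_def)
qed

lemma nn_integral_normal_density: "0 < \<sigma> \<Longrightarrow> (\<integral>\<^sup>+s. ennreal (normal_density \<mu> \<sigma> s) \<partial>lborel) = 1"
proof -
  assume "0 < \<sigma>"
  have "(\<integral>\<^sup>+s. ennreal (normal_density \<mu> \<sigma> s) \<partial>lborel) = ennreal (\<integral>s. normal_density \<mu> \<sigma> s \<partial>lborel)"
    by (rule nn_integral_eq_integral) (auto intro!: integrable_normal_density simp: \<open>0 < \<sigma>\<close>)
  then show ?thesis using integral_normal_density[OF \<open>0 < \<sigma>\<close>] by simp
qed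

lemma nn_integral_gauss_density:
  "(\<integral>\<^sup>+x. ennreal (gauss_density (x::'a::euclidean_space)) \<partial>lborel) = 1"
proof -
  have "(\<integral>\<^sup>+x. ennreal (gauss_density (x::'a)) \<partial>lborel)
      = (\<integral>\<^sup>+x. (\<Prod>b\<in>Basis. ennreal (std_normal_density ((x::'a) \<bullet> b))) \<partial>lborel)"
    by (intro nn_integral_cong) (simp add: gauss_density_eq_prod prod_ennreal)
  also have "\<dots> = (\<Prod>b\<in>(Basis::'a set). (\<integral>\<^sup>+s. ennreal (std_normal_density s) \<partial>lborel))"
    by (rule nn_integral_lborel_prod) auto
  also have "\<dots> = 1" by (simp add: nn_integral_normal_density)
  finally show ?thesis .
qed

lemma integrable_gauss_density: "integrable lborel (gauss_density :: 'a::euclidean_space \<Rightarrow> real)"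
  by (rule integrableI_nonneg)
    (auto intro!: AE_I2 simp: nn_integral_gauss_density gauss_density_pos less_imp_le)

lemma integral_gauss_density: "integral\<^sup>L lborel (gauss_density :: 'a::euclidean_space \<Rightarrow> real) = 1"
  using nn_integral_eq_integral[OF integrable_gauss_density] nn_integral_gauss_density
    gauss_density_pos
  by (metis (no_types, lifting) AE_I2 ennreal_eq_1 less_le)

lemma std_gaussian_eq_density: "std_gaussian = density lborel (\<lambda>x. ennreal (gauss_density x))"
  by (simp add: std_gaussian_def gauss_density_def)

lemma prob_space_std_gaussian: "prob_space std_gaussian"
  by (rule prob_spaceI)
    (simp add: std_gaussian_eq_density emeasure_density nn_integral_gauss_density)

definition gauss_majorant :: "'a::euclidean_space \<Rightarrow> real" where
  "gauss_majorant x = exp (- (norm x)\<^sup>2 / 4)"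

lemma borel_measurable_gauss_majorant[measurable]: "gauss_majorant \<in> borel_measurable borel"
  unfolding gauss_majorant_def[abs_def] by measurable

lemma integrable_gauss_majorant: "integrable lborel (gauss_majorant :: 'a::euclidean_space \<Rightarrow> real)"
proof -
  have nd: "normal_density 0 (sqrt 2) s = exp (- s\<^sup>2 / 4) / sqrt (4 * pi)" for s
    by (simp add: normal_density_def real_sqrt_mult)
  have one: "(\<integral>\<^sup>+s. ennreal (exp (- s\<^sup>2 / 4)) \<partial>lborel) = ennreal (sqrt (4 * pi))"
  proof -
    have "(\<integral>\<^sup>+s. ennreal (exp (- s\<^sup>2 / 4)) \<partial>lborel)
        = (\<integral>\<^sup>+s. ennreal (sqrt (4 * pi)) * ennreal (normal_density 0 (sqrt 2) s) \<partial>lborel)"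
      by (intro nn_integral_cong) (simp add: nd ennreal_mult[symmetric])
    also have "\<dots> = ennreal (sqrt (4 * pi)) * (\<integral>\<^sup>+s. ennreal (normal_density 0 (sqrt 2) s) \<partial>lborel)"
      by (rule nn_integral_cmult) simp
    also have "(\<integral>\<^sup>+s. ennreal (normal_density 0 (sqrt 2) s) \<partial>lborel) = 1"
      by (rule nn_integral_normal_density) simp
    finally show ?thesis by simp
  qed
  have "gauss_majorant x = (\<Prod>b\<in>Basis. exp (- (x \<bullet> b)\<^sup>2 / 4))" for x :: 'a
    by (simp add: gauss_majorant_def exp_sum[symmetric] power2_norm_eq_sum_Basis
        sum_divide_distrib[symmetric] sum_negf)
  then have "(\<integral>\<^sup>+x. ennreal (gauss_majorant (x::'a)) \<partial>lborel)
      = (\<integral>\<^sup>+x. (\<Prod>b\<in>Basis. ennreal (exp (- ((x::'a) \<bullet> b)\<^sup>2 / 4))) \<partial>lborel)"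
    by (intro nn_integral_cong) (simp add: prod_ennreal)
  also have "\<dots> = (\<Prod>b\<in>(Basis::'a set). (\<integral>\<^sup>+s. ennreal (exp (- s\<^sup>2 / 4)) \<partial>lborel))"
    by (rule nn_integral_lborel_prod) auto
  also have "\<dots> = (\<Prod>b\<in>(Basis::'a set). ennreal (sqrt (4 * pi)))" using one by simp
  finally have "(\<integral>\<^sup>+x. ennreal (gauss_majorant (x::'a)) \<partial>lborel) < \<infinity>"
    by (simp add: ennreal_power)
  then show ?thesis
    by (intro integrableI_nonneg) (auto simp: gauss_majorant_def)
qed

lemma add_one_mult_exp_le:
  fixes s :: real
  assumes "0 \<le> s"
  shows "(s + 1) * exp (s + 1) \<le> exp (s\<^sup>2 / 4 + 6)"
proof -
  have "s + 1 \<le> exp s" by (metis add.commute exp_ge_add_one_self)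
  then have "(s + 1) * exp (s + 1) \<le> exp s * exp (s + 1)" by (intro mult_right_mono) auto
  also have "\<dots> = exp (2 * s + 1)" by (simp add: exp_add[symmetric])
  also have "\<dots> \<le> exp (s\<^sup>2 / 4 + 6)"
  proof -
    have "0 \<le> (s / 2 - 2)\<^sup>2" by simp
    then have "2 * s + 1 \<le> s\<^sup>2 / 4 + 6" by (simp add: power2_eq_square field_simps)
    then show ?thesis by simp
  qed
  finally show ?thesis .
qed

lemma gauss_density_mult_le_majorant:
  fixes x :: "'a::euclidean_space" and s :: real
  assumes "0 \<le> s" "s \<le> norm x"
  shows "gauss_density x * ((s + 1) * exp (s + 1))
    \<le> (2 * pi) powr (- real DIM('a) / 2) * exp 6 * gauss_majorant x"
proof -
  have "(s + 1) * exp (s + 1) \<le> exp (s\<^sup>2 / 4 + 6)" by (rule add_one_mult_exp_le[OF assms(1)])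
  also have "\<dots> \<le> exp ((norm x)\<^sup>2 / 4 + 6)" using assms by (simp add: power_mono)
  finally have "gauss_density x * ((s + 1) * exp (s + 1))
      \<le> gauss_density x * exp ((norm x)\<^sup>2 / 4 + 6)"
    by (intro mult_left_mono) (auto simp: gauss_density_pos less_imp_le)
  also have "\<dots> = (2 * pi) powr (- real DIM('a) / 2) * exp 6 * gauss_majorant x"
    by (simp add: gauss_density_def gauss_majorant_def exp_add[symmetric] algebra_simps)
  finally show ?thesis .
qed

lemma integrable_gauss_density_mult_bounded:
  fixes k :: "'a::euclidean_space \<Rightarrow> real"
  assumes [measurable]: "k \<in> borel_measurable borel" and "\<And>x. \<bar>k x\<bar> \<le> B"
  shows "integrable lborel (\<lambda>x. gauss_density x * k x)"
proof (rule Bochner_Integration.integrable_bound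
    [OF integrable_mult_right[OF integrable_gauss_density]])
  show "AE x in lborel. norm (gauss_density x * k x) \<le> norm (B * gauss_density x)"
  proof (intro AE_I2)
    fix x
    have "\<bar>k x\<bar> \<le> \<bar>B\<bar>" using assms(2)[of x] by linarith
    then show "norm (gauss_density x * k x) \<le> norm (B * gauss_density x)"
      using gauss_density_pos[of x] by (simp add: abs_mult mult.commute mult_left_mono)
  qed
qed measurable

section \<open>Gaussian integration by parts\<close>

lemma lborel_integral_translate:
  fixes G :: "'a::euclidean_space \<Rightarrow> real"
  assumes [measurable]: "G \<in> borel_measurable borel"
  shows "integral\<^sup>L lborel G = integral\<^sup>L lborel (\<lambda>x. G (x + c))"
    and "integrable lborel G \<longleftrightarrow> integrable lborel (\<lambda>x. G (x + c))"
proof -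
  have lborel: "distr lborel borel (\<lambda>x. x + c) = lborel"
    unfolding add.commute[of _ c] by (rule lborel_distr_plus)
  show "integral\<^sup>L lborel G = integral\<^sup>L lborel (\<lambda>x. G (x + c))"
    by (subst (1) lborel[symmetric], rule integral_distr) simp_all
  show "integrable lborel G \<longleftrightarrow> integrable lborel (\<lambda>x. G (x + c))"
    by (subst (1) lborel[symmetric], rule integrable_distr_eq) simp_all
qed

lemma abs_exp_minus_one_le:
  fixes u :: real
  shows "\<bar>exp u - 1\<bar> \<le> \<bar>u\<bar> * exp \<bar>u\<bar>"
proof (cases "0 \<le> u")
  case True
  have "1 - u \<le> exp (- u)" using exp_ge_add_one_self[of "-u"] by simp
  then have "exp u * (1 - u) \<le> exp u * exp (- u)" by (intro mult_left_mono) auto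
  then have "exp u - 1 \<le> u * exp u" by (simp add: exp_minus field_simps)
  then show ?thesis using True by simp
next
  case False
  have "1 + u \<le> exp u" using exp_ge_add_one_self[of u] by simp
  moreover have "exp u \<le> 1" using False by simp
  moreover have "1 \<le> exp \<bar>u\<bar>" by simp
  ultimately have "\<bar>exp u - 1\<bar> \<le> \<bar>u\<bar>" using False by linarith
  also have "\<dots> \<le> \<bar>u\<bar> * exp \<bar>u\<bar>" by (rule mult_le_cancel_left1[THEN iffD2]) simp
  finally show ?thesis .
qed

lemma abs_exp_difference_quotient_le:
  fixes t s :: real
  assumes t: "0 < t" "t \<le> 1"
  shows "\<bar>(exp (t * s - t\<^sup>2 / 2) - 1) / t\<bar> \<le> (\<bar>s\<bar> + 1) * exp (\<bar>s\<bar> + 1)"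
proof -
  let ?u = "t * s - t\<^sup>2 / 2"
  have u1: "\<bar>?u\<bar> \<le> t * (\<bar>s\<bar> + 1)"
  proof -
    have "\<bar>?u\<bar> \<le> \<bar>t * s\<bar> + \<bar>t\<^sup>2 / 2\<bar>" by (rule abs_triangle_ineq4)
    also have "\<bar>t\<^sup>2 / 2\<bar> = t\<^sup>2 / 2" by simp
    finally have "\<bar>?u\<bar> \<le> \<bar>t * s\<bar> + t\<^sup>2 / 2" .
    also have "\<dots> \<le> t * \<bar>s\<bar> + t" using t by (simp add: abs_mult power2_eq_square mult_left_le)
    finally show ?thesis by (simp add: algebra_simps)
  qed
  have u2: "\<bar>?u\<bar> \<le> \<bar>s\<bar> + 1" using u1 t by (smt (verit) mult_left_le_one_le abs_ge_zero)
  have "\<bar>exp ?u - 1\<bar> \<le> \<bar>?u\<bar> * exp \<bar>?u\<bar>" by (rule abs_exp_minus_one_le)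
  also have "\<dots> \<le> (t * (\<bar>s\<bar> + 1)) * exp (\<bar>s\<bar> + 1)" using u1 u2 by (intro mult_mono) auto
  finally show ?thesis using t by (simp add: abs_div pos_divide_le_eq algebra_simps)
qed

lemma gauss_density_diff_scaleR:
  fixes y b :: "'a::euclidean_space" assumes b: "b \<in> Basis"
  shows "gauss_density (y - t *\<^sub>R b) = gauss_density y * exp (t * (y \<bullet> b) - t\<^sup>2 / 2)"
proof -
  have "(norm (y - t *\<^sub>R b))\<^sup>2 = (norm y)\<^sup>2 - 2 * t * (y \<bullet> b) + t\<^sup>2"
    using b unfolding power2_norm_eq_inner
    by (simp add: inner_diff_left inner_diff_right inner_commute power2_eq_square inner_Basis)
  then show ?thesis
    by (simp add: gauss_density_def exp_add[symmetric] algebra_simps diff_divide_distrib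
        add_divide_distrib)
qed

lemma integral_gauss_difference_quotient:
  fixes h :: "'a::euclidean_space \<Rightarrow> real"
  assumes b: "b \<in> Basis" and [measurable]: "h \<in> borel_measurable borel"
    and bounded: "\<And>x. \<bar>h x\<bar> \<le> B"
  shows "(\<integral>x. gauss_density x * ((h (x + t *\<^sub>R b) - h x) / t) \<partial>lborel)
       = (\<integral>x. gauss_density x * h x * ((exp (t * (x \<bullet> b) - t\<^sup>2 / 2) - 1) / t) \<partial>lborel)"
proof -
  have int: "integrable lborel (\<lambda>x. gauss_density x * h x)"
    "integrable lborel (\<lambda>x. gauss_density x * h (x + t *\<^sub>R b))"
    using bounded by (auto intro!: integrable_gauss_density_mult_bounded)
  have int_exp: "integrable lborel (\<lambda>x. gauss_density x * h x * exp (t * (x \<bullet> b) - t\<^sup>2 / 2))"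
    using int(2) lborel_integral_translate(2)[of "\<lambda>y. gauss_density (y - t *\<^sub>R b) * h y" "t *\<^sub>R b"]
    by (simp add: gauss_density_diff_scaleR[OF b] mult_ac)
  have "(\<integral>x. gauss_density x * h (x + t *\<^sub>R b) \<partial>lborel)
      = (\<integral>x. gauss_density x * h x * exp (t * (x \<bullet> b) - t\<^sup>2 / 2) \<partial>lborel)"
    using lborel_integral_translate(1)[of "\<lambda>y. gauss_density (y - t *\<^sub>R b) * h y" "t *\<^sub>R b"]
    by (simp add: gauss_density_diff_scaleR[OF b] mult_ac)
  then show ?thesis
    using int int_exp by (simp add: right_diff_distrib diff_divide_distrib[symmetric])
qed

lemma tendsto_integral_gauss_difference_quotient:
  fixes h :: "'a::euclidean_space \<Rightarrow> real"
  assumes [measurable]: "h \<in> borel_measurable borel"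
    and lipschitz: "\<And>x t. \<bar>h (x + t *\<^sub>R b) - h x\<bar> \<le> K * \<bar>t\<bar>"
    and deriv: "\<And>x. ((\<lambda>t. h (x + t *\<^sub>R b)) has_real_derivative D x) (at 0)"
  defines "t n \<equiv> inverse (real (Suc n))"
  shows "integrable lborel (\<lambda>x. gauss_density x * D x)"
    and "(\<lambda>n. \<integral>x. gauss_density x * ((h (x + t n *\<^sub>R b) - h x) / t n) \<partial>lborel)
           \<longlonglongrightarrow> (\<integral>x. gauss_density x * D x \<partial>lborel)"
proof -
  define L where "L n x = gauss_density x * ((h (x + t n *\<^sub>R b) - h x) / t n)" for n x
  have [measurable]: "L n \<in> borel_measurable borel" for n unfolding L_def by measurable
  have lim: "(\<lambda>n. L n x) \<longlonglongrightarrow> gauss_density x * D x" for x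
    using difference_quotient_inverse_Suc_tendsto[OF deriv[of x]]
    unfolding L_def t_def by (intro tendsto_mult tendsto_const) simp
  have [measurable]: "(\<lambda>x. gauss_density x * D x) \<in> borel_measurable borel"
    by (rule borel_measurable_LIMSEQ_metric[OF _ lim]) simp
  have bound: "\<bar>L n x\<bar> \<le> K * gauss_density x" for n x
  proof -
    have "\<bar>(h (x + t n *\<^sub>R b) - h x) / t n\<bar> \<le> K"
      using lipschitz[of x "t n"] by (simp add: t_def abs_div divide_le_eq)
    then have "gauss_density x * \<bar>(h (x + t n *\<^sub>R b) - h x) / t n\<bar> \<le> gauss_density x * K"
      using gauss_density_pos[of x] by (intro mult_left_mono) auto
    then show ?thesis using gauss_density_pos[of x] by (simp add: L_def abs_mult mult.commute)
  qed
  have majorant: "integrable lborel (\<lambda>x. K * gauss_density x)"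
    by (intro integrable_mult_right integrable_gauss_density)
  have lim_AE: "AE x in lborel. (\<lambda>n. L n x) \<longlonglongrightarrow> gauss_density x * D x"
    using lim by simp
  have bound_AE: "AE x in lborel. norm (L n x) \<le> K * gauss_density x" for n
    using bound by simp
  note dominated = majorant lim_AE bound_AE
  show "integrable lborel (\<lambda>x. gauss_density x * D x)"
    by (rule integrable_dominated_convergence[OF _ _ dominated]) simp_all
  show "(\<lambda>n. \<integral>x. gauss_density x * ((h (x + t n *\<^sub>R b) - h x) / t n) \<partial>lborel)
      \<longlonglongrightarrow> (\<integral>x. gauss_density x * D x \<partial>lborel)"
    using integral_dominated_convergence[OF _ _ dominated] by (simp add: L_def)
qed

lemma tendsto_integral_gauss_exp_quotient:
  fixes h :: "'a::euclidean_space \<Rightarrow> real"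
  assumes b: "b \<in> Basis" and [measurable]: "h \<in> borel_measurable borel"
    and bounded: "\<And>x. \<bar>h x\<bar> \<le> B"
  defines "t n \<equiv> inverse (real (Suc n))"
  shows "integrable lborel (\<lambda>x. gauss_density x * (x \<bullet> b) * h x)"
    and "(\<lambda>n. \<integral>x. gauss_density x * h x * ((exp (t n * (x \<bullet> b) - (t n)\<^sup>2 / 2) - 1) / t n) \<partial>lborel)
           \<longlonglongrightarrow> (\<integral>x. gauss_density x * (x \<bullet> b) * h x \<partial>lborel)"
proof -
  define R where "R n x = gauss_density x * h x * ((exp (t n * (x \<bullet> b) - (t n)\<^sup>2 / 2) - 1) / t n)"
    for n x
  have [measurable]: "R n \<in> borel_measurable borel" for n unfolding R_def by measurable
  have lim: "(\<lambda>n. R n x) \<longlonglongrightarrow> gauss_density x * (x \<bullet> b) * h x" for x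
  proof -
    have "((\<lambda>s. exp (s * (x \<bullet> b) - s\<^sup>2 / 2)) has_real_derivative (x \<bullet> b)) (at 0)"
      by (auto intro!: derivative_eq_intros)
    from difference_quotient_inverse_Suc_tendsto[OF this]
    have "(\<lambda>n. (exp (t n * (x \<bullet> b) - (t n)\<^sup>2 / 2) - 1) / t n) \<longlonglongrightarrow> x \<bullet> b"
      by (simp add: t_def)
    then have "(\<lambda>n. gauss_density x * h x * ((exp (t n * (x \<bullet> b) - (t n)\<^sup>2 / 2) - 1) / t n))
        \<longlonglongrightarrow> gauss_density x * h x * (x \<bullet> b)"
      by (rule tendsto_mult_left)
    then show ?thesis by (simp add: R_def mult_ac)
  qed
  define C where "C = (2 * pi) powr (- real DIM('a) / 2) * exp 6"
  have bound: "\<bar>R n x\<bar> \<le> B * C * gauss_majorant x" for n x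
  proof -
    have "0 < t n" "t n \<le> 1" by (auto simp: t_def field_simps)
    then have "\<bar>R n x\<bar> \<le> gauss_density x * B * ((\<bar>x \<bullet> b\<bar> + 1) * exp (\<bar>x \<bullet> b\<bar> + 1))"
      using gauss_density_pos[of x] bounded[of x] abs_exp_difference_quotient_le
      unfolding R_def abs_mult by (intro mult_mono) (auto simp: less_imp_le)
    also have "\<dots> = B * (gauss_density x * ((\<bar>x \<bullet> b\<bar> + 1) * exp (\<bar>x \<bullet> b\<bar> + 1)))"
      by (simp add: mult_ac)
    also have "\<dots> \<le> B * (C * gauss_majorant x)"
      using bounded[of x] Basis_le_norm[OF b, of x] unfolding C_def
      by (intro mult_left_mono[OF gauss_density_mult_le_majorant]) auto
    finally show ?thesis by simp
  qed
  have majorant: "integrable lborel (\<lambda>x::'a. B * C * gauss_majorant x)"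
    by (intro integrable_mult_right integrable_gauss_majorant)
  have lim_AE: "AE x in lborel. (\<lambda>n. R n x) \<longlonglongrightarrow> gauss_density x * (x \<bullet> b) * h x"
    using lim by simp
  have bound_AE: "AE x in lborel. norm (R n x) \<le> B * C * gauss_majorant x" for n
    using bound by simp
  note dominated = majorant lim_AE bound_AE
  show "integrable lborel (\<lambda>x. gauss_density x * (x \<bullet> b) * h x)"
    by (rule integrable_dominated_convergence[OF _ _ dominated]) simp_all
  show "(\<lambda>n. \<integral>x. gauss_density x * h x * ((exp (t n * (x \<bullet> b) - (t n)\<^sup>2 / 2) - 1) / t n) \<partial>lborel)
      \<longlonglongrightarrow> (\<integral>x. gauss_density x * (x \<bullet> b) * h x \<partial>lborel)"
    using integral_dominated_convergence[OF _ _ dominated] by (simp add: R_def)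
qed

lemma gaussian_integration_by_parts:
  fixes h :: "'a::euclidean_space \<Rightarrow> real"
  assumes b: "b \<in> Basis" and h: "h \<in> borel_measurable borel"
    and bounded: "\<And>x. \<bar>h x\<bar> \<le> B"
    and lipschitz: "\<And>x t. \<bar>h (x + t *\<^sub>R b) - h x\<bar> \<le> K * \<bar>t\<bar>"
    and deriv: "\<And>x. ((\<lambda>t. h (x + t *\<^sub>R b)) has_real_derivative D x) (at 0)"
  shows "integrable lborel (\<lambda>x. gauss_density x * D x)"
    and "integrable lborel (\<lambda>x. gauss_density x * (x \<bullet> b) * h x)"
    and "(\<integral>x. gauss_density x * (x \<bullet> b) * h x \<partial>lborel) = (\<integral>x. gauss_density x * D x \<partial>lborel)"
proof -
  note difference = tendsto_integral_gauss_difference_quotient[OF h lipschitz deriv]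
  note exp_quotient = tendsto_integral_gauss_exp_quotient[OF b h bounded]
  show "integrable lborel (\<lambda>x. gauss_density x * D x)"
    and "integrable lborel (\<lambda>x. gauss_density x * (x \<bullet> b) * h x)"
    using difference(1) exp_quotient(1) .
  show "(\<integral>x. gauss_density x * (x \<bullet> b) * h x \<partial>lborel) = (\<integral>x. gauss_density x * D x \<partial>lborel)"
    using LIMSEQ_unique[OF exp_quotient(2) difference(2)[unfolded
        integral_gauss_difference_quotient[OF b h bounded]]] .
qed

lemma (in sigma_finite_measure) KL_divergence_density_pos:
  fixes \<rho> :: "'a \<Rightarrow> real"
  assumes [measurable]: "\<rho> \<in> borel_measurable M" and pos: "\<And>x. 0 < \<rho> x"
    and integrable: "integrable (density M \<rho>) (\<lambda>y. ln (\<rho> y))"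
  shows "absolutely_continuous M (density M \<rho>)
    \<and> integrable (density M \<rho>) (entropy_density (exp 1) M (density M \<rho>))
    \<and> KL_divergence (exp 1) M (density M \<rho>) = (\<integral>y. ln (\<rho> y) \<partial>density M \<rho>)"
proof -
  let ?N = "density M \<rho>"
  have ac: "absolutely_continuous M ?N"
    by (rule absolutely_continuousI_density) simp
  have "AE y in M. ennreal (\<rho> y) = RN_deriv M ?N y"
    by (rule RN_deriv_unique) simp_all
  then have "AE y in ?N. ennreal (\<rho> y) = RN_deriv M ?N y"
    using absolutely_continuous_AE[OF _ ac] by simp
  then have entropy: "AE y in ?N. entropy_density (exp 1) M ?N y = ln (\<rho> y)"
  proof eventually_elim
    case (elim y)
    then show ?case
      using pos[of y] by (simp add: entropy_density_def log_def elim[symmetric] less_imp_le)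
  qed
  have measurable_N: "measurable ?N = measurable M"
    by (intro ext measurable_cong_sets) simp_all
  have [measurable]: "entropy_density (exp 1) M ?N \<in> borel_measurable ?N"
    unfolding measurable_N by (rule measurable_entropy_density)
  have "integrable ?N (entropy_density (exp 1) M ?N)"
    using integrable_cong_AE[OF _ _ entropy] integrable by (simp add: measurable_N)
  moreover have "KL_divergence (exp 1) M ?N = (\<integral>y. ln (\<rho> y) \<partial>?N)"
    unfolding KL_divergence_def by (rule integral_cong_AE) (simp_all add: measurable_N entropy)
  ultimately show ?thesis using ac by blast
qed

section \<open>Pushforward of a density under a diffeomorphism\<close>

lemma distr_density_lborel_eq_density:
  fixes \<psi> :: "'a::euclidean_space \<Rightarrow> 'a" and f :: "'a \<Rightarrow> real"
  assumes bij: "bij \<psi>" and deriv: "\<And>x. (\<psi> has_derivative \<psi>' x) (at x)"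
    and jacobian: "\<And>x. jacobian_det (\<psi>' x) \<noteq> 0"
    and [measurable]: "inv \<psi> \<in> borel_measurable borel" "f \<in> borel_measurable borel"
    and nonneg: "\<And>x. 0 \<le> f x" and integrable: "integrable lborel f"
  shows "distr (density lborel f) borel \<psi>
    = density lborel (\<lambda>y. f (inv \<psi> y) / \<bar>jacobian_det (\<psi>' (inv \<psi> y))\<bar>)"
proof (rule measure_eqI)
  fix A
  assume "A \<in> sets (distr (density lborel f) borel \<psi>)"
  then have [measurable]: "A \<in> sets borel" by simp
  have [measurable]: "\<psi> \<in> borel_measurable borel"
    using deriv by (rule borel_measurable_has_derivative)
  have [measurable]: "(\<lambda>x. jacobian_det (\<psi>' x)) \<in> borel_measurable borel"
    using deriv by (rule borel_measurable_jacobian_det)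
  define F where "F y = f (inv \<psi> y) / \<bar>jacobian_det (\<psi>' (inv \<psi> y))\<bar> * indicator A y" for y
  define G where "G x = f x * indicator A (\<psi> x)" for x
  have [measurable]: "F \<in> borel_measurable borel" "G \<in> borel_measurable borel"
    unfolding F_def[abs_def] G_def[abs_def] by measurable
  have FG: "\<bar>jacobian_det (\<psi>' x)\<bar> * F (\<psi> x) = G x" for x
    using bij jacobian[of x] by (simp add: F_def G_def bij_is_inj)
  have "integrable lborel G"
    using integrable by (rule Bochner_Integration.integrable_bound)
      (auto simp: G_def indicator_def nonneg)
  then have "integrable lborel F" "(\<integral>y. F y \<partial>lborel) = (\<integral>x. G x \<partial>lborel)"
    using integrable_lborel_change_of_variables[OF bij deriv, of F]
      integral_lborel_change_of_variables[OF bij deriv, of F]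
    by (simp_all add: FG)
  moreover have "0 \<le> F y" "0 \<le> G y" for y
    by (simp_all add: F_def G_def nonneg)
  ultimately have integral_eq: "(\<integral>\<^sup>+x. G x \<partial>lborel) = (\<integral>\<^sup>+y. F y \<partial>lborel)"
    using \<open>integrable lborel G\<close> by (simp add: nn_integral_eq_integral)
  have "emeasure (distr (density lborel f) borel \<psi>) A = emeasure (density lborel f) (\<psi> -` A)"
    by (simp add: emeasure_distr)
  also have "\<dots> = (\<integral>\<^sup>+x. G x \<partial>lborel)"
    using measurable_sets[of \<psi> borel borel A]
    by (auto simp: emeasure_density G_def intro!: nn_integral_cong split: split_indicator)
  also have "\<dots> = (\<integral>\<^sup>+y. F y \<partial>lborel)"
    by (rule integral_eq)
  also have "\<dots> = emeasure (density lborel (\<lambda>y. f (inv \<psi> y) / \<bar>jacobian_det (\<psi>' (inv \<psi> y))\<bar>)) A"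
    by (auto simp: emeasure_density F_def intro!: nn_integral_cong split: split_indicator)
  finally show "emeasure (distr (density lborel f) borel \<psi>) A
      = emeasure (density lborel (\<lambda>y. f (inv \<psi> y) / \<bar>jacobian_det (\<psi>' (inv \<psi> y))\<bar>)) A" .
qed simp

lemma
  fixes \<psi> :: "'a::euclidean_space \<Rightarrow> 'a" and F :: "'a \<Rightarrow> real"
  assumes [measurable]: "\<psi> \<in> borel_measurable borel" "F \<in> borel_measurable borel"
  shows integrable_pushforward_std_gaussian_iff:
      "integrable (pushforward \<psi> std_gaussian) F
        \<longleftrightarrow> integrable lborel (\<lambda>x. gauss_density x * F (\<psi> x))"
    and integral_pushforward_std_gaussian:
      "(\<integral>y. F y \<partial>pushforward \<psi> std_gaussian) = (\<integral>x. gauss_density x * F (\<psi> x) \<partial>lborel)"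
proof -
  have nonneg: "AE x in lborel. 0 \<le> gauss_density x"
    by (simp add: gauss_density_pos less_imp_le)
  show "integrable (pushforward \<psi> std_gaussian) F
      \<longleftrightarrow> integrable lborel (\<lambda>x. gauss_density x * F (\<psi> x))"
    unfolding pushforward_def std_gaussian_eq_density
    by (subst integrable_distr_eq) (simp_all add: integrable_density[OF _ _ nonneg])
  show "(\<integral>y. F y \<partial>pushforward \<psi> std_gaussian) = (\<integral>x. gauss_density x * F (\<psi> x) \<partial>lborel)"
    unfolding pushforward_def std_gaussian_eq_density
    by (subst integral_distr) (simp_all add: integral_density[OF _ _ nonneg])
qed

locale near_identity_map =
  fixes \<psi> :: "'a::euclidean_space \<Rightarrow> 'a" and \<psi>' :: "'a \<Rightarrow> 'a \<Rightarrow> 'a" and m1 m2 :: real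
  assumes bij_map: "bij \<psi>"
    and has_derivative_map: "\<And>v. (\<psi> has_derivative \<psi>' v) (at v)"
    and m2_nonneg: "0 \<le> m2" and m2_less_1: "m2 < 1"
    and displacement_bounded: "\<And>v. norm (\<psi> v - v) \<le> m1"
    and derivative_near_id: "\<And>v. onorm (\<lambda>h. \<psi>' v h - h) \<le> m2"
begin

lemma borel_measurable_map[measurable]: "\<psi> \<in> borel_measurable borel"
  using has_derivative_map by (rule borel_measurable_has_derivative)

lemma displacement_has_derivative:
  "((\<lambda>x. \<psi> x - x) has_derivative (\<lambda>h. \<psi>' x h - h)) (at x)"
  using has_derivative_map[of x] by (auto intro!: derivative_eq_intros)

lemma displacement_lipschitz: "norm ((\<psi> x - x) - (\<psi> y - y)) \<le> m2 * norm (x - y)"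
  using differentiable_bound[of UNIV "\<lambda>x. \<psi> x - x" "\<lambda>x h. \<psi>' x h - h" m2]
  by (simp add: displacement_has_derivative derivative_near_id)

lemma borel_measurable_inv_map[measurable]: "inv \<psi> \<in> borel_measurable borel"
proof -
  have "(1 - m2) * norm (x - y) \<le> norm (\<psi> x - \<psi> y)" for x y
  proof -
    have "\<psi> x - \<psi> y = (x - y) + ((\<psi> x - x) - (\<psi> y - y))"
      by simp
    then have "norm (x - y) - norm ((\<psi> x - x) - (\<psi> y - y)) \<le> norm (\<psi> x - \<psi> y)"
      by (metis norm_diff_ineq diff_minus_eq_add minus_diff_eq)
    then show ?thesis using displacement_lipschitz[of x y] by (simp add: algebra_simps)
  qed
  then have "(1 - m2) * norm (inv \<psi> y - inv \<psi> z) \<le> norm (y - z)" for y z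
    using bij_map by (metis bij_inv_eq_iff)
  then have "(1 / (1 - m2))-lipschitz_on UNIV (inv \<psi>)"
    using m2_less_1 by (intro lipschitz_onI) (simp_all add: dist_norm field_simps)
  then show ?thesis
    by (intro borel_measurable_continuous_onI lipschitz_on_continuous_on)
qed

lemma
  shows jacobian_det_derivative_nonzero: "jacobian_det (\<psi>' x) \<noteq> 0"
    and trace_sub_ln_jacobian_det_le:
      "(\<Sum>b\<in>Basis. (\<psi>' x b - b) \<bullet> b) - ln \<bar>jacobian_det (\<psi>' x)\<bar>
        \<le> real DIM('a) * (m2\<^sup>2 / (2 * (1 - m2)))"
    and abs_ln_jacobian_det_le:
      "\<bar>ln \<bar>jacobian_det (\<psi>' x)\<bar>\<bar> \<le> real DIM('a) * (m2 - ln (1 - m2))"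
proof -
  note bounds = jacobian_det_bounds[OF has_derivative_bounded_linear[OF has_derivative_map]
      derivative_near_id m2_nonneg m2_less_1]
  show "jacobian_det (\<psi>' x) \<noteq> 0"
    and "(\<Sum>b\<in>Basis. (\<psi>' x b - b) \<bullet> b) - ln \<bar>jacobian_det (\<psi>' x)\<bar>
        \<le> real DIM('a) * (m2\<^sup>2 / (2 * (1 - m2)))"
    using bounds by blast+
  have "ln (1 - m2) \<le> 0" using m2_nonneg m2_less_1 by simp
  then have "real DIM('a) * ln (1 - m2) \<le> 0" "0 \<le> real DIM('a) * m2"
    using m2_nonneg by (simp_all add: mult_nonneg_nonpos)
  then show "\<bar>ln \<bar>jacobian_det (\<psi>' x)\<bar>\<bar> \<le> real DIM('a) * (m2 - ln (1 - m2))"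
    using bounds[of x] unfolding abs_le_iff right_diff_distrib by linarith
qed

definition density_ratio :: "'a \<Rightarrow> real" where
  "density_ratio y
    = gauss_density (inv \<psi> y) / (\<bar>jacobian_det (\<psi>' (inv \<psi> y))\<bar> * gauss_density y)"

lemma density_ratio_pos: "0 < density_ratio y"
  using jacobian_det_derivative_nonzero[of "inv \<psi> y"] gauss_density_pos[of "inv \<psi> y"]
    gauss_density_pos[of y]
  by (simp add: density_ratio_def)

lemma borel_measurable_density_ratio[measurable]: "density_ratio \<in> borel_measurable borel"
proof -
  have [measurable]: "(\<lambda>x. jacobian_det (\<psi>' x)) \<in> borel_measurable borel"
    using has_derivative_map by (rule borel_measurable_jacobian_det)
  show ?thesis unfolding density_ratio_def[abs_def] by measurable
qed

lemma pushforward_eq_density: "pushforward \<psi> std_gaussian = density std_gaussian density_ratio"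
proof -
  have "gauss_density (inv \<psi> y) / \<bar>jacobian_det (\<psi>' (inv \<psi> y))\<bar>
      = ennreal (gauss_density y) * ennreal (density_ratio y)" for y
    using gauss_density_pos[of y] density_ratio_pos[of y]
    by (simp add: density_ratio_def ennreal_mult'[symmetric])
  then show ?thesis
    using distr_density_lborel_eq_density[OF bij_map has_derivative_map
        jacobian_det_derivative_nonzero _ _ _ integrable_gauss_density]
    by (simp add: pushforward_def std_gaussian_eq_density density_density_eq
        gauss_density_pos less_imp_le)
qed

lemma ln_density_ratio:
  "ln (density_ratio (\<psi> x))
    = x \<bullet> (\<psi> x - x) + (norm (\<psi> x - x))\<^sup>2 / 2 - ln \<bar>jacobian_det (\<psi>' x)\<bar>"
proof -
  define c :: real where "c = (2 * pi) powr (- real DIM('a) / 2)"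
  have ln_gauss: "ln (gauss_density y) = ln c - (norm y)\<^sup>2 / 2" for y :: 'a
    by (simp add: gauss_density_def c_def ln_mult)
  have "(norm (\<psi> x))\<^sup>2 = (norm x)\<^sup>2 + 2 * (x \<bullet> (\<psi> x - x)) + (norm (\<psi> x - x))\<^sup>2"
    by (simp add: power2_norm_eq_inner inner_diff_left inner_diff_right inner_commute)
  then show ?thesis
    using bij_map jacobian_det_derivative_nonzero[of x] gauss_density_pos[of x]
      gauss_density_pos[of "\<psi> x"]
    by (simp add: density_ratio_def bij_is_inj ln_div ln_mult ln_gauss add_divide_distrib)
qed

lemma
  shows integrable_gauss_inner_displacement:
      "integrable lborel (\<lambda>x. gauss_density x * (x \<bullet> (\<psi> x - x)))"
    and integrable_gauss_trace_displacement:
      "integrable lborel (\<lambda>x. gauss_density x * (\<Sum>b\<in>Basis. (\<psi>' x b - b) \<bullet> b))"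
    and integral_gauss_inner_displacement:
      "(\<integral>x. gauss_density x * (x \<bullet> (\<psi> x - x)) \<partial>lborel)
        = (\<integral>x. gauss_density x * (\<Sum>b\<in>Basis. (\<psi>' x b - b) \<bullet> b) \<partial>lborel)"
proof -
  have by_parts: "integrable lborel (\<lambda>x. gauss_density x * ((\<psi>' x b - b) \<bullet> b))
      \<and> integrable lborel (\<lambda>x. gauss_density x * (x \<bullet> b) * ((\<psi> x - x) \<bullet> b))
      \<and> (\<integral>x. gauss_density x * (x \<bullet> b) * ((\<psi> x - x) \<bullet> b) \<partial>lborel)
          = (\<integral>x. gauss_density x * ((\<psi>' x b - b) \<bullet> b) \<partial>lborel)"
    if b: "b \<in> Basis" for b
  proof -
    have bounded: "\<bar>(\<psi> x - x) \<bullet> b\<bar> \<le> m1" for x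
      using Basis_le_norm[OF b] displacement_bounded order_trans by blast
    have lipschitz:
      "\<bar>(\<psi> (x + t *\<^sub>R b) - (x + t *\<^sub>R b)) \<bullet> b - (\<psi> x - x) \<bullet> b\<bar> \<le> m2 * \<bar>t\<bar>" for x t
      using Basis_le_norm[OF b] displacement_lipschitz[of "x + t *\<^sub>R b" x] b
      by (simp add: inner_diff_left[symmetric]) (meson order_trans)
    have deriv: "((\<lambda>t. (\<psi> (x + t *\<^sub>R b) - (x + t *\<^sub>R b)) \<bullet> b)
        has_real_derivative (\<psi>' x b - b) \<bullet> b) (at 0)" for x
      by (rule has_real_derivative_directional_inner[OF displacement_has_derivative])
    have "(\<lambda>x. (\<psi> x - x) \<bullet> b) \<in> borel_measurable borel"
      by measurable
    from gaussian_integration_by_parts[OF b this bounded lipschitz deriv] show ?thesis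
      by blast
  qed
  have inner: "gauss_density x * (x \<bullet> (\<psi> x - x))
      = (\<Sum>b\<in>Basis. gauss_density x * (x \<bullet> b) * ((\<psi> x - x) \<bullet> b))" for x
    unfolding euclidean_inner[of x "\<psi> x - x"] sum_distrib_left by (simp add: mult.assoc)
  have trace: "gauss_density x * (\<Sum>b\<in>Basis. (\<psi>' x b - b) \<bullet> b)
      = (\<Sum>b\<in>Basis. gauss_density x * ((\<psi>' x b - b) \<bullet> b))" for x
    by (simp add: sum_distrib_left)
  show "integrable lborel (\<lambda>x. gauss_density x * (x \<bullet> (\<psi> x - x)))"
    and "integrable lborel (\<lambda>x. gauss_density x * (\<Sum>b\<in>Basis. (\<psi>' x b - b) \<bullet> b))"
    and "(\<integral>x. gauss_density x * (x \<bullet> (\<psi> x - x)) \<partial>lborel)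
        = (\<integral>x. gauss_density x * (\<Sum>b\<in>Basis. (\<psi>' x b - b) \<bullet> b) \<partial>lborel)"
    unfolding inner trace using by_parts
    by (auto intro!: Bochner_Integration.integrable_sum simp: Bochner_Integration.integral_sum)
qed

lemma
  shows integrable_gauss_ln_density_ratio:
      "integrable lborel (\<lambda>x. gauss_density x * ln (density_ratio (\<psi> x)))"
    and integral_gauss_ln_density_ratio_le:
      "(\<integral>x. gauss_density x * ln (density_ratio (\<psi> x)) \<partial>lborel)
        \<le> m1\<^sup>2 / 2 + real DIM('a) * m2\<^sup>2 / (2 * (1 - m2))"
proof -
  let ?J = "\<lambda>x. ln \<bar>jacobian_det (\<psi>' x)\<bar>"
  let ?tr = "\<lambda>x. \<Sum>b\<in>Basis. (\<psi>' x b - b) \<bullet> b"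
  have [measurable]: "(\<lambda>x. jacobian_det (\<psi>' x)) \<in> borel_measurable borel"
    using has_derivative_map by (rule borel_measurable_jacobian_det)
  have "\<bar>(norm (\<psi> x - x))\<^sup>2 / 2\<bar> \<le> m1\<^sup>2 / 2" for x
    using displacement_bounded[of x] by (simp add: power_mono)
  then have int_sq: "integrable lborel (\<lambda>x. gauss_density x * ((norm (\<psi> x - x))\<^sup>2 / 2))"
    by (intro integrable_gauss_density_mult_bounded[where B = "m1\<^sup>2 / 2"]) simp_all
  have int_J: "integrable lborel (\<lambda>x. gauss_density x * ?J x)"
    using abs_ln_jacobian_det_le
    by (intro integrable_gauss_density_mult_bounded[where B = "real DIM('a) * (m2 - ln (1 - m2))"])
      simp_all
  have split: "gauss_density x * ln (density_ratio (\<psi> x))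
      = gauss_density x * (x \<bullet> (\<psi> x - x)) + gauss_density x * ((norm (\<psi> x - x))\<^sup>2 / 2)
        - gauss_density x * ?J x" for x
    by (simp add: ln_density_ratio algebra_simps)
  show "integrable lborel (\<lambda>x. gauss_density x * ln (density_ratio (\<psi> x)))"
    unfolding split using integrable_gauss_inner_displacement int_sq int_J by simp
  have "(\<integral>x. gauss_density x * ln (density_ratio (\<psi> x)) \<partial>lborel)
      = (\<integral>x. gauss_density x * (x \<bullet> (\<psi> x - x)) \<partial>lborel)
        + (\<integral>x. gauss_density x * ((norm (\<psi> x - x))\<^sup>2 / 2) \<partial>lborel)
        - (\<integral>x. gauss_density x * ?J x \<partial>lborel)"
    unfolding split using integrable_gauss_inner_displacement int_sq int_J by simp
  also have "\<dots> = (\<integral>x. gauss_density x * ?tr x \<partial>lborel)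
        + (\<integral>x. gauss_density x * ((norm (\<psi> x - x))\<^sup>2 / 2) \<partial>lborel)
        - (\<integral>x. gauss_density x * ?J x \<partial>lborel)"
    by (simp only: integral_gauss_inner_displacement)
  also have "\<dots> = (\<integral>x. gauss_density x * (?tr x - ?J x + (norm (\<psi> x - x))\<^sup>2 / 2) \<partial>lborel)"
    using integrable_gauss_trace_displacement int_sq int_J by (simp add: algebra_simps)
  also have "\<dots> \<le> (\<integral>x. gauss_density (x::'a) * (real DIM('a) * (m2\<^sup>2 / (2 * (1 - m2))) + m1\<^sup>2 / 2)
      \<partial>lborel)"
  proof -
    have lhs: "integrable lborel (\<lambda>x. gauss_density x * (?tr x - ?J x + (norm (\<psi> x - x))\<^sup>2 / 2))"
      using integrable_gauss_trace_displacement int_sq int_J by (simp add: algebra_simps)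
    have rhs: "integrable lborel
        (\<lambda>x::'a. gauss_density x * (real DIM('a) * (m2\<^sup>2 / (2 * (1 - m2))) + m1\<^sup>2 / 2))"
      by (intro integrable_mult_left integrable_gauss_density)
    have pointwise: "gauss_density x * (?tr x - ?J x + (norm (\<psi> x - x))\<^sup>2 / 2)
        \<le> gauss_density x * (real DIM('a) * (m2\<^sup>2 / (2 * (1 - m2))) + m1\<^sup>2 / 2)" for x
    proof -
      have "(norm (\<psi> x - x))\<^sup>2 \<le> m1\<^sup>2"
        using displacement_bounded[of x] by (simp add: power_mono)
      then show ?thesis
        using trace_sub_ln_jacobian_det_le[of x] gauss_density_pos[of x]
        by (intro mult_left_mono) simp_all
    qed
    show ?thesis by (rule Bochner_Integration.integral_mono[OF lhs rhs pointwise])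
  qed
  also have "\<dots> = m1\<^sup>2 / 2 + real DIM('a) * m2\<^sup>2 / (2 * (1 - m2))"
    using integral_gauss_density[where 'a='a] by simp
  finally show "(\<integral>x. gauss_density x * ln (density_ratio (\<psi> x)) \<partial>lborel)
      \<le> m1\<^sup>2 / 2 + real DIM('a) * m2\<^sup>2 / (2 * (1 - m2))" .
qed

end

theorem lemma10:
  fixes \<psi> :: "'a::euclidean_space \<Rightarrow> 'a" and \<psi>' :: "'a \<Rightarrow> 'a \<Rightarrow> 'a"
    and m1 m2 :: real
  assumes "bij \<psi>"
    and "\<And>v. (\<psi> has_derivative \<psi>' v) (at v)"
    and "0 \<le> m1" and "0 \<le> m2" and "m2 < 1"
    and "\<And>v. norm (\<psi> v - v) \<le> m1"
    and "\<And>v. onorm (\<lambda>h. \<psi>' v h - h) \<le> m2"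
  shows "absolutely_continuous std_gaussian (pushforward \<psi> std_gaussian)
    \<and> integrable (pushforward \<psi> std_gaussian)
        (entropy_density (exp 1) std_gaussian (pushforward \<psi> std_gaussian))
    \<and> KL_divergence (exp 1) std_gaussian (pushforward \<psi> std_gaussian)
        \<le> m1\<^sup>2 / 2 + real DIM('a) * m2\<^sup>2 / (2 * (1 - m2))"
proof -
  interpret near_identity_map \<psi> \<psi>' m1 m2
    using assms by unfold_locales
  interpret std_gaussian: prob_space std_gaussian
    by (rule prob_space_std_gaussian)
  have "integrable (pushforward \<psi> std_gaussian) (\<lambda>y. ln (density_ratio y))"
    using integrable_gauss_ln_density_ratio by (simp add: integrable_pushforward_std_gaussian_iff)
  then have "absolutely_continuous std_gaussian (pushforward \<psi> std_gaussian)
    \<and> integrable (pushforward \<psi> std_gaussian)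
        (entropy_density (exp 1) std_gaussian (pushforward \<psi> std_gaussian))
    \<and> KL_divergence (exp 1) std_gaussian (pushforward \<psi> std_gaussian)
        = (\<integral>y. ln (density_ratio y) \<partial>pushforward \<psi> std_gaussian)"
    unfolding pushforward_eq_density
    by (intro std_gaussian.KL_divergence_density_pos density_ratio_pos)
      (simp_all add: std_gaussian_eq_density)
  moreover have "(\<integral>y. ln (density_ratio y) \<partial>pushforward \<psi> std_gaussian)
      \<le> m1\<^sup>2 / 2 + real DIM('a) * m2\<^sup>2 / (2 * (1 - m2))"
    using integral_gauss_ln_density_ratio_le by (simp add: integral_pushforward_std_gaussian)
  ultimately show ?thesis by simp
qed

end
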